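(* For any integer $k \geq 1$ and any real number $M > 0$, there exist infinitely many square-free integers $d > 0$ such that $h(jd) > M$ for all $j = 1, \ldots, k$.
   Context: For an integer $m$ which is not a perfect square, $h(m)$ denotes the class number of the quadratic field $\mathbb{Q}(\sqrt{m})$. *)

theory Defs
  imports "HOL-Computational_Algebra.Computational_Algebra"
begin

definition quad_field :: "int \<Rightarrow> complex set" where
  "quad_field m = {a + b * csqrt (of_int m) | a b. a \<in> \<rat> \<and> b \<in> \<rat>}"

definition is_alg_int :: "complex \<Rightarrow> bool" where
  "is_alg_int x \<longleftrightarrow> (\<exists>p :: int poly. lead_coeff p = 1 \<and> poly (map_poly of_int p) x = 0)"

definition quad_ints :: "int \<Rightarrow> complex set" where
  "quad_ints m = {x \<in> quad_field m. is_alg_int x}"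

definition is_ideal_in :: "complex set \<Rightarrow> complex set \<Rightarrow> bool" where
  "is_ideal_in R I \<longleftrightarrow> I \<subseteq> R \<and> 0 \<in> I \<and> (\<forall>x\<in>I. \<forall>y\<in>I. x + y \<in> I \<and> x - y \<in> I)
     \<and> (\<forall>r\<in>R. \<forall>x\<in>I. r * x \<in> I)"

definition nonzero_ideals :: "complex set \<Rightarrow> complex set set" where
  "nonzero_ideals R = {I. is_ideal_in R I \<and> I \<noteq> {0}}"

definition ideal_equiv :: "complex set \<Rightarrow> (complex set \<times> complex set) set" where
  "ideal_equiv R = {(I, J). I \<in> nonzero_ideals R \<and> J \<in> nonzero_ideals R \<and>
      (\<exists>\<alpha>\<in>R. \<exists>\<beta>\<in>R. \<alpha> \<noteq> 0 \<and> \<beta> \<noteq> 0 \<and> (\<lambda>x. \<alpha> * x) ` I = (\<lambda>x. \<beta> * x) ` J)}"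

definition class_number :: "int \<Rightarrow> nat" where
  "class_number m = card (nonzero_ideals (quad_ints m) // ideal_equiv (quad_ints m))"

end

(*
  The class group of Q(sqrt m), m > 1 squarefree, is finite: by Dirichlet's approximation theorem
  every ideal class contains an ideal whose elements have norms with gcd at most 1 + 2 sqrt m.
  For an odd prime q dividing m with (-1/q) = 1, the genus character at q is multiplicative and
  trivial on norms of elements, hence constant on ideal classes, and it separates the classes of
  the ideals (s, sqrt m) with s dividing m. Choose primes q_1, ..., q_S congruent to 1 mod 4 and,
  by the Chinese remainder theorem, squarefree s_1, ..., s_S with (s_c/q_c') = -1 exactly when
  c = c'; then every squarefree m divisible by the product d of all q_c and s_c has h(m) > S.
  If moreover d is coprime to k!, then for j <= k, writing j = f^2 j' with j' squarefree,
  m = j' d is squarefree and h(j d) = h(j' d) > S. As the q_c may be taken arbitrarily large,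
  there are infinitely many such d.
*)

theory Submission
  imports Defs "HOL-Number_Theory.Number_Theory" "HOL-Analysis.Kronecker_Approximation_Theorem"
begin

section \<open>Squarefree integers and monic polynomials\<close>

lemma squarefree_square_dvd_mult_square:
  fixes m g z :: int
  assumes sqf: "squarefree m" and dvd: "g^2 dvd m * z^2"
  shows "g dvd z"
proof (cases "g = 0")
  case True
  then have "m * z^2 = 0" using dvd by simp
  moreover have "m \<noteq> 0" using sqf by (metis not_squarefree_0)
  ultimately show ?thesis using True by simp
next
  case False
  define h where "h = gcd g z"
  have "h \<noteq> 0" using False by (simp add: h_def)
  obtain g' z' where g': "g = g' * h" and z': "z = z' * h" and "coprime g' z'"
    using gcd_coprime_exists[of g z] False unfolding h_def by auto
  have "h^2 * g'^2 dvd h^2 * (m * z'^2)"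
    using dvd by (simp add: g' z' power_mult_distrib mult_ac)
  then have "g'^2 dvd m * z'^2" using \<open>h \<noteq> 0\<close> by simp
  moreover have "coprime (g'^2) (z'^2)" using \<open>coprime g' z'\<close> by simp
  ultimately have "g'^2 dvd m" by (metis coprime_dvd_mult_left_iff mult.commute)
  then have "g' dvd z'" using sqf squarefreeD by (meson dvd_trans one_dvd)
  then show ?thesis using g' z' by (simp add: mult_dvd_mono)
qed

lemma squarefree_mult_square_eq_square:
  fixes m a b :: int
  assumes sqf: "squarefree m" and "m > 1" and eq: "m * b^2 = a^2"
  shows "b = 0"
proof -
  have "a dvd b" using squarefree_square_dvd_mult_square[OF sqf, of a b] eq by simp
  moreover have "b dvd a"
  proof -
    have "b^2 dvd a^2" using eq by (metis dvd_triv_right)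
    then show ?thesis by simp
  qed
  ultimately have "\<bar>a\<bar> = \<bar>b\<bar>" by (rule zdvd_antisym_abs)
  then have "a^2 = b^2" by (metis power2_abs)
  then show ?thesis using eq \<open>m > 1\<close> by simp
qed

lemma Ints_if_squarefree_mult_square:
  fixes m :: int and b :: rat
  assumes sqf: "squarefree m" and "of_int m * b^2 \<in> \<int>"
  shows "b \<in> \<int>"
proof -
  obtain p q where pq: "quotient_of b = (p, q)" by (cases "quotient_of b") auto
  have q0: "q > 0" and "coprime p q" and b: "b = of_int p / of_int q"
    using quotient_of_denom_pos[OF pq] quotient_of_coprime[OF pq] quotient_of_div[OF pq] by auto
  obtain n where "of_int m * b^2 = of_int n" using assms(2) by (auto elim: Ints_cases)
  then have "of_int (m * p^2) = (of_int (n * q^2) :: rat)"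
    using q0 by (simp add: b power_divide field_simps)
  then have "q^2 dvd m * p^2" by (metis dvd_triv_right of_int_eq_iff)
  then have "q dvd p" using squarefree_square_dvd_mult_square[OF sqf] by blast
  then have "q dvd 1" using \<open>coprime p q\<close> by (meson coprime_common_divisor dvd_refl)
  then have "q = 1" using q0 by simp
  then show ?thesis using b by simp
qed

lemma squarefree_mult_imp_coprime:
  fixes a b :: int
  assumes "squarefree (a * b)"
  shows "coprime a b"
proof (rule coprimeI)
  fix c assume "c dvd a" "c dvd b"
  then have "c^2 dvd a * b" by (simp add: power2_eq_square mult_dvd_mono)
  then show "is_unit c" using assms squarefreeD by blast
qed

lemma map_poly_add_hom:
  assumes "f 0 = 0" "\<And>a b. f (a + b) = f a + f b"
  shows "map_poly f (p + q) = map_poly f p + map_poly f q"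
  by (intro poly_eqI) (simp add: coeff_map_poly assms)

lemma map_poly_mult_hom:
  fixes f :: "'a::comm_ring_1 \<Rightarrow> 'b::comm_ring_1"
  assumes f0: "f 0 = 0" and f_add: "\<And>a b. f (a + b) = f a + f b"
    and f_mult: "\<And>a b. f (a * b) = f a * f b"
  shows "map_poly f (p * q) = map_poly f p * map_poly f q"
proof (induction p)
  case 0
  then show ?case by (simp add: f0)
next
  case (pCons a p)
  have "map_poly f (pCons a p * q) = map_poly f (Polynomial.smult a q + pCons 0 (p * q))"
    by simp
  also have "\<dots> = Polynomial.smult (f a) (map_poly f q) + pCons 0 (map_poly f p * map_poly f q)"
    by (simp add: map_poly_add_hom[OF f0 f_add] map_poly_smult[OF f0 f_mult]
        map_poly_pCons[where f = f, OF f0] pCons.IH f0)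
  also have "\<dots> = map_poly f (pCons a p) * map_poly f q"
    by (simp add: map_poly_pCons[where f = f, OF f0])
  finally show ?case .
qed

lemma map_poly_of_int_inject:
  assumes "map_poly (of_int :: int \<Rightarrow> 'b::ring_char_0) p = map_poly of_int q"
  shows "p = q"
proof (rule poly_eqI)
  fix n
  have "poly.coeff (map_poly (of_int :: int \<Rightarrow> 'b) p) n = poly.coeff (map_poly of_int q) n"
    using assms by simp
  then show "poly.coeff p n = poly.coeff q n" by (simp add: coeff_map_poly)
qed

lemma rat_poly_clear_denominators:
  fixes s :: "rat poly"
  obtains e :: int and s' where "e > 0" "Polynomial.smult (of_int e) s = map_poly of_int s'"
proof -
  have "\<exists>e s'. e > (0::int) \<and> Polynomial.smult (of_int e) s = map_poly of_int s'"
  proof (induction s)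
    case 0
    show ?case by (rule exI[of _ 1], rule exI[of _ 0]) simp
  next
    case (pCons a s)
    then obtain e s' where "e > 0" and es: "Polynomial.smult (of_int e) s = map_poly of_int s'"
      by blast
    obtain p q where pq: "quotient_of a = (p, q)" by (cases "quotient_of a") auto
    have "q > 0" and a: "a = of_int p / of_int q"
      using quotient_of_denom_pos[OF pq] quotient_of_div[OF pq] by auto
    have "Polynomial.smult (of_int (e * q)) (pCons a s)
        = pCons (of_int (e * p)) (Polynomial.smult (of_int q) (Polynomial.smult (of_int e) s))"
      using \<open>q > 0\<close> by (simp add: a field_simps)
    also have "\<dots> = map_poly of_int (pCons (e * p) (Polynomial.smult q s'))"
      by (simp add: es map_poly_pCons map_poly_smult)
    finally show ?case using \<open>e > 0\<close> \<open>q > 0\<close> by (intro exI[of _ "e * q"] exI) simp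
  qed
  then show ?thesis using that by blast
qed

lemma content_eq_1_if_lead_coeff_1:
  fixes p :: "int poly"
  assumes "lead_coeff p = 1"
  shows "Polynomial.content p = 1"
proof -
  have "Polynomial.content p dvd 1" using content_dvd_coeff[of p "degree p"] assms by simp
  moreover have "Polynomial.content p \<ge> 0"
    by (metis abs_ge_zero normalize_content normalize_int_def)
  ultimately show ?thesis by simp
qed

text \<open>Gauss's lemma, by comparing contents after clearing denominators.\<close>
lemma monic_factor_of_monic_int_poly:
  fixes p :: "int poly" and q s :: "rat poly"
  assumes lc: "lead_coeff p = 1" and eq: "map_poly of_int p = q * s" and lc_q: "lead_coeff q = 1"
  obtains q' where "q = map_poly of_int q'"
proof -
  obtain e1 q1 where e1: "e1 > 0" and eq1: "Polynomial.smult (of_int e1) q = map_poly of_int q1"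
    using rat_poly_clear_denominators[of q] by blast
  obtain e2 s1 where e2: "e2 > 0" and eq2: "Polynomial.smult (of_int e2) s = map_poly of_int s1"
    using rat_poly_clear_denominators[of s] by blast
  have "map_poly (of_int :: int \<Rightarrow> rat) (Polynomial.smult (e1 * e2) p)
      = Polynomial.smult (of_int e1 * of_int e2) (q * s)"
    using eq by (simp add: map_poly_smult)
  also have "\<dots> = Polynomial.smult (of_int e1) q * Polynomial.smult (of_int e2) s"
    by (simp add: mult_ac)
  also have "\<dots> = map_poly of_int (q1 * s1)"
    by (simp add: eq1 eq2 map_poly_mult_hom)
  finally have E: "Polynomial.smult (e1 * e2) p = q1 * s1" by (rule map_poly_of_int_inject)
  have "(of_int (lead_coeff q1) :: rat) = lead_coeff (map_poly of_int q1)"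
    by (simp add: degree_map_poly coeff_map_poly)
  then have lc_q1: "lead_coeff q1 = e1" using eq1 lc_q
    by (metis lead_coeff_smult mult.right_neutral of_int_eq_iff)
  have "Polynomial.content (Polynomial.smult (e1 * e2) p) = Polynomial.content (q1 * s1)"
    using E by simp
  then have "e1 * e2 = Polynomial.content q1 * Polynomial.content s1"
    using e1 e2 content_eq_1_if_lead_coeff_1[OF lc] by (simp add: content_mult abs_mult)
  then have "Polynomial.smult (e1 * e2) p
      = Polynomial.smult (e1 * e2) (primitive_part q1 * primitive_part s1)"
    using E by (metis content_times_primitive_part mult_smult_left mult_smult_right smult_smult)
  then have "p = primitive_part q1 * primitive_part s1" using smult_cancel[of "e1 * e2"] e1 e2
    by simp
  then have "lead_coeff (primitive_part q1) * lead_coeff (primitive_part s1) = 1"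
    using lc by (simp add: lead_coeff_mult)
  then have "lead_coeff (primitive_part q1) = 1 \<or> lead_coeff (primitive_part q1) = -1"
    by (auto simp: zmult_eq_1_iff)
  moreover have "Polynomial.content q1 * lead_coeff (primitive_part q1) = e1"
    using lc_q1 by (metis content_times_primitive_part degree_primitive_part lead_coeff_smult)
  moreover have "Polynomial.content q1 \<ge> 0"
    by (metis abs_ge_zero normalize_content normalize_int_def)
  ultimately have "Polynomial.content q1 = e1" using e1 by (auto simp: mult_less_0_iff)
  then have "Polynomial.smult (of_int e1) q
      = Polynomial.smult (of_int e1) (map_poly of_int (primitive_part q1))"
    using eq1 by (metis content_times_primitive_part map_poly_smult of_int_0 of_int_mult)
  then have "q = map_poly of_int (primitive_part q1)"
    by (rule smult_cancel[rotated]) (use e1 in simp)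
  then show ?thesis using that by blast
qed

lemma monic_quadratic_factor_Ints:
  fixes p :: "int poly" and t N :: rat and s :: "rat poly"
  assumes "lead_coeff p = 1" and "map_poly of_int p = [:N, t, 1:] * s"
  shows "t \<in> \<int>" "N \<in> \<int>"
proof -
  obtain q' where q': "[:N, t, 1:] = map_poly of_int q'"
    using monic_factor_of_monic_int_poly[OF assms] by auto
  have "t = poly.coeff [:N, t, 1:] 1" "N = poly.coeff [:N, t, 1:] 0" by simp_all
  then show "t \<in> \<int>" "N \<in> \<int>" unfolding q' by (simp_all add: coeff_map_poly)
qed

lemma rat_poly_degree_le_1_root_Rats:
  fixes p :: "rat poly" and x :: complex
  assumes "degree p \<le> 1" and root: "poly (map_poly of_rat p) x = 0" and "x \<notin> \<rat>"
  shows "p = 0"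
proof -
  define c0 c1 where "c0 = poly.coeff p 0" and "c1 = poly.coeff p 1"
  have p: "p = [:c0, c1:]"
  proof (rule poly_eqI)
    fix n
    show "poly.coeff p n = poly.coeff [:c0, c1:] n"
      using assms(1) by (cases n) (auto simp: c0_def c1_def coeff_pCons coeff_eq_0 split: nat.split)
  qed
  have "of_rat c0 + of_rat c1 * x = 0" using root
    by (subst (asm) p) (simp add: map_poly_pCons mult.commute)
  moreover have "x \<noteq> - of_rat c0 / of_rat c1" if "c1 \<noteq> 0"
    using \<open>x \<notin> \<rat>\<close> by auto
  ultimately have "c1 = 0" by (auto simp: field_simps add_eq_0_iff)
  then show ?thesis using \<open>of_rat c0 + _ = 0\<close> p by simp
qed

text \<open>The quadratic divides every integer polynomial vanishing at \<open>x\<close>, since the remainder is a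
  rational polynomial of degree \<open>\<le> 1\<close> with the irrational root \<open>x\<close>; so Gauss's lemma applies.\<close>
lemma algebraic_int_quadratic_coeffs_Ints:
  fixes p :: "int poly" and t N :: rat and x :: complex
  assumes lc: "lead_coeff p = 1" and p_root: "poly (map_poly of_int p) x = 0"
    and q_root: "poly (map_poly of_rat [:N, t, 1:]) x = 0" and "x \<notin> \<rat>"
  shows "t \<in> \<int>" "N \<in> \<int>"
proof -
  define q where "q = [:N, t, 1:]"
  define pQ :: "rat poly" where "pQ = map_poly of_int p"
  define rr where "rr = pQ mod q"
  have hom_add: "map_poly (of_rat :: rat \<Rightarrow> complex) (f + g) = map_poly of_rat f + map_poly of_rat g"
    for f g
    by (rule map_poly_add_hom) (auto simp: of_rat_add)
  have hom_mult: "map_poly (of_rat :: rat \<Rightarrow> complex) (f * g) = map_poly of_rat f * map_poly of_rat g"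
    for f g
    by (rule map_poly_mult_hom) (auto simp: of_rat_add of_rat_mult)
  have "poly (map_poly of_rat pQ) x = 0"
    using p_root by (simp add: pQ_def map_poly_map_poly o_def)
  moreover have decomp: "pQ = q * (pQ div q) + rr" by (simp add: rr_def)
  have "poly (map_poly of_rat pQ) x
      = poly (map_poly of_rat q) x * poly (map_poly of_rat (pQ div q)) x + poly (map_poly of_rat rr) x"
    by (subst decomp) (simp add: hom_add hom_mult)
  ultimately have "poly (map_poly of_rat rr) x = 0" using q_root by (simp add: q_def)
  moreover have "degree rr \<le> 1"
    using degree_mod_less[of q pQ] by (auto simp: rr_def q_def)
  ultimately have "rr = 0" using \<open>x \<notin> \<rat>\<close> by (intro rat_poly_degree_le_1_root_Rats)
  then have "map_poly of_int p = [:N, t, 1:] * (pQ div q)"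
    using decomp by (simp add: pQ_def q_def)
  then show "t \<in> \<int>" "N \<in> \<int>" using monic_quadratic_factor_Ints[OF lc] by blast+
qed

section \<open>Legendre symbols and genus characters\<close>

lemma Legendre_cong:
  assumes "[a = b] (mod p)"
  shows "Legendre a p = Legendre b p"
proof -
  have "[a = 0] (mod p) \<longleftrightarrow> [b = 0] (mod p)" and "QuadRes p a \<longleftrightarrow> QuadRes p b"
    using assms cong_sym cong_trans unfolding QuadRes_def by metis+
  then show ?thesis unfolding Legendre_def by simp
qed

lemma Legendre_square:
  assumes "prime (p::int)" and "\<not> p dvd a"
  shows "Legendre (a^2) p = 1"
proof -
  have "\<not> p dvd a^2" using assms prime_dvd_power by blast
  moreover have "QuadRes p (a^2)" unfolding QuadRes_def by (intro exI[of _ a]) simp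
  ultimately show ?thesis by (simp add: Legendre_def cong_0_iff)
qed

lemma Legendre_1:
  assumes "prime (p::int)"
  shows "Legendre 1 p = 1"
  using Legendre_square[OF assms, of 1] assms not_prime_unit by force

lemma Legendre_eq_0_iff: "Legendre a p = 0 \<longleftrightarrow> p dvd a"
  by (simp add: Legendre_def cong_0_iff)

lemma coprime_if_Legendre_nonzero:
  assumes "prime (p::int)" "Legendre a p \<noteq> 0"
  shows "coprime a p"
  using assms prime_imp_coprime[of p a] by (simp add: Legendre_eq_0_iff coprime_commute)

lemma Legendre_not_dvd_cases:
  assumes "\<not> p dvd a"
  shows "Legendre a p = 1 \<or> Legendre a p = -1"
  using assms by (simp add: Legendre_def cong_0_iff)

lemma Legendre_mult:
  assumes p: "prime (p::int)" "p > 2"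
  shows "Legendre (a * b) p = Legendre a p * Legendre b p"
proof -
  define e where "e = (nat p - 1) div 2"
  have euler: "[Legendre x p = x ^ e] (mod p)" for x
    using euler_criterion[of "nat p" x] p unfolding e_def by simp
  have "[Legendre (a * b) p = Legendre a p * Legendre b p] (mod p)"
    using euler[of "a * b"] cong_mult[OF euler[of a] euler[of b]]
    by (metis cong_sym cong_trans power_mult_distrib)
  then have "p dvd \<bar>Legendre (a * b) p - Legendre a p * Legendre b p\<bar>" (is "p dvd \<bar>?d\<bar>")
    by (simp add: cong_iff_dvd_diff)
  moreover have "\<bar>?d\<bar> \<le> 2" by (auto simp: Legendre_def)
  ultimately have "?d = 0" using p(2) zdvd_imp_le[of p "\<bar>?d\<bar>"] by fastforce
  then show ?thesis by simp
qed

lemma Legendre_nonresidue_exists: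
  assumes p: "prime (p::int)" "p > 2"
  obtains a where "0 < a" "a < p" "Legendre a p = -1"
proof -
  define S where "S = {1..p - 1}"
  define f where "f y = y^2 mod p" for y
  have fS: "f ` S \<subseteq> S"
  proof
    fix z assume "z \<in> f ` S"
    then obtain y where y: "y \<in> S" "z = y^2 mod p" by (auto simp: f_def)
    have "\<not> p dvd y" using y(1) by (auto simp: S_def zdvd_not_zless)
    then have "\<not> p dvd y^2" using p(1) prime_dvd_power by blast
    then have "y^2 mod p \<noteq> 0" by (simp add: dvd_eq_mod_eq_0)
    moreover have "0 \<le> y^2 mod p" "y^2 mod p < p" using p by auto
    ultimately have "1 \<le> y^2 mod p" "y^2 mod p \<le> p - 1" by linarith+
    then show "z \<in> S" using y by (simp add: S_def)
  qed
  text \<open>Squaring identifies \<open>1\<close> and \<open>p - 1\<close>, so it does not permute the nonzero residues.\<close>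
  have "\<not> inj_on f S"
  proof
    assume "inj_on f S"
    moreover have "1 \<in> S" "p - 1 \<in> S" using p by (auto simp: S_def)
    moreover have "(p - 1)^2 = 1 + p * (p - 2)" by (simp add: power2_eq_square algebra_simps)
    then have "f 1 = f (p - 1)" by (simp add: f_def)
    ultimately have "1 = p - 1" by (meson inj_onD)
    then show False using p by simp
  qed
  then have "f ` S \<noteq> S"
    using finite_surj_inj[of S f] by (auto simp: S_def)
  then obtain a where a: "a \<in> S" "a \<notin> f ` S" using fS by blast
  have "\<not> [a = 0] (mod p)" using a(1) by (auto simp: S_def cong_0_iff zdvd_not_zless)
  moreover have "\<not> QuadRes p a"
  proof
    assume "QuadRes p a"
    then obtain y where y: "[y^2 = a] (mod p)" by (auto simp: QuadRes_def)
    define y' where "y' = y mod p"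
    have "[y'^2 = y^2] (mod p)" unfolding y'_def by (intro cong_pow) (simp add: cong_def)
    then have "[y'^2 = a] (mod p)" using y cong_trans by blast
    then have fy: "f y' = a" using a(1) by (auto simp: f_def S_def Cong.cong_def)
    then have "y' \<noteq> 0" using a(1) by (auto simp: f_def S_def)
    moreover have "0 \<le> y'" "y' < p" using p by (simp_all add: y'_def)
    ultimately have "y' \<in> S" by (simp add: S_def)
    then show False using a(2) fy by blast
  qed
  ultimately have "Legendre a p = -1" by (simp add: Legendre_def)
  moreover have "0 < a" "a < p" using a(1) by (auto simp: S_def)
  ultimately show ?thesis using that by blast
qed

text \<open>A prime divisor of \<open>(n!)^2 + 1\<close> exceeds \<open>n\<close> and has \<open>-1\<close> as a quadratic residue.\<close>
lemma exists_prime_Legendre_minus_one: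
  fixes N :: int
  obtains q where "prime q" "q > N" "q > 2" "Legendre (-1) q = 1"
proof -
  define n where "n = max (nat N) 2"
  obtain p where p: "prime p" "p dvd (fact n)^2 + (1::nat)"
    using prime_factor_nat[of "(fact n)^2 + 1"] by auto
  have "p > n"
  proof (rule ccontr)
    assume "\<not> p > n"
    then have "p dvd (fact n)^2" using prime_ge_1_nat[OF p(1)]
      by (simp add: dvd_fact power2_eq_square)
    then have "p dvd 1" using p(2) by (metis dvd_add_right_iff)
    then show False using p(1) by simp
  qed
  define q where "q = int p"
  have "prime q" "q > N" "q > 2" using p(1) \<open>p > n\<close> by (auto simp: q_def n_def)
  have "int p dvd int ((fact n)^2 + 1)" using p(2) by (simp only: of_nat_dvd_iff)
  then have "q dvd (int (fact n))^2 + 1" by (simp add: q_def add.commute)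
  then have "[(int (fact n))^2 = -1] (mod q)" by (simp add: cong_iff_dvd_diff)
  then have "QuadRes q (-1)" unfolding QuadRes_def by blast
  moreover have "\<not> [-1 = 0] (mod q)" using \<open>q > 2\<close> by (auto simp: cong_0_iff dest: zdvd_imp_le)
  ultimately have "Legendre (-1) q = 1" by (simp add: Legendre_def)
  then show ?thesis using that \<open>prime q\<close> \<open>q > N\<close> \<open>q > 2\<close> by blast
qed

text \<open>The genus character of \<open>\<rat>(\<surd>(q w))\<close> at the odd prime \<open>q\<close>, on nonzero integers: writing
  \<open>n = q\<^sup>v n'\<close> with \<open>q\<close> not dividing \<open>n'\<close>, it is \<open>(n'/q) (-w/q)\<^sup>v\<close>.\<close>
definition genus_char :: "int \<Rightarrow> int \<Rightarrow> int \<Rightarrow> int" where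
  "genus_char q w n = Legendre (n div q ^ multiplicity q n) q * Legendre (- w) q ^ multiplicity q n"

lemma genus_char_not_dvd: "\<not> q dvd n \<Longrightarrow> genus_char q w n = Legendre n q"
  by (simp add: genus_char_def not_dvd_imp_multiplicity_0)

locale genus_character =
  fixes q w :: int
  assumes q_prime: "prime q" and q_gt_2: "q > 2" and q_not_dvd_w: "\<not> q dvd w"
begin

lemma not_unit: "\<not> is_unit q"
  using q_prime not_prime_unit by blast

lemma Legendre_minus_w_cases: "Legendre (- w) q = 1 \<or> Legendre (- w) q = -1"
  using Legendre_not_dvd_cases[of q "- w"] q_not_dvd_w by simp

lemma genus_char_mult:
  assumes "n \<noteq> 0" "k \<noteq> 0"
  shows "genus_char q w (n * k) = genus_char q w n * genus_char q w k"
proof -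
  define a where "a = multiplicity q n"
  define b where "b = multiplicity q k"
  have n: "n = q ^ a * (n div q ^ a)" and k: "k = q ^ b * (k div q ^ b)"
    using multiplicity_dvd[of q n] multiplicity_dvd[of q k] by (simp_all add: a_def b_def)
  have "multiplicity q (n * k) = a + b"
    using prime_elem_multiplicity_mult_distrib[OF prime_imp_prime_elem[OF q_prime] assms]
    by (simp add: a_def b_def)
  moreover have "(n * k) div q ^ (a + b) = (n div q ^ a) * (k div q ^ b)"
    using q_gt_2 by (subst n, subst k) (simp add: power_add algebra_simps)
  ultimately show ?thesis
    unfolding genus_char_def a_def[symmetric] b_def[symmetric]
    by (simp add: Legendre_mult[OF q_prime q_gt_2] power_add algebra_simps)
qed

lemma genus_char_self: "genus_char q w q = Legendre (- w) q"
proof -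
  have "multiplicity q q = 1" using q_gt_2 not_unit by (simp add: multiplicity_self)
  then show ?thesis using q_gt_2 by (simp add: genus_char_def Legendre_1[OF q_prime])
qed

lemma genus_char_square_mult:
  assumes "n \<noteq> 0" "c \<noteq> 0" "\<not> q dvd c"
  shows "genus_char q w (c^2 * n) = genus_char q w n"
proof -
  have "\<not> q dvd c^2" using assms(3) q_prime prime_dvd_power by blast
  then have "genus_char q w (c^2) = 1"
    using Legendre_square[OF q_prime assms(3)] by (simp add: genus_char_not_dvd)
  then show ?thesis using genus_char_mult[of "c^2" n] assms by simp
qed

lemma genus_char_norm_form_not_dvd_A:
  assumes "\<not> q dvd A"
  shows "genus_char q w (A^2 - q * w * B^2) = 1"
proof -
  have "\<not> q dvd A^2" using assms q_prime prime_dvd_power by blast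
  then have "\<not> q dvd A^2 - q * w * B^2" using dvd_diff_left_iff[of q "q * w * B^2" "A^2"] by simp
  moreover have "[A^2 - q * w * B^2 = A^2] (mod q)" by (simp add: cong_iff_dvd_diff)
  ultimately show ?thesis
    using genus_char_not_dvd Legendre_cong Legendre_square[OF q_prime assms] by metis
qed

lemma genus_char_norm_form_not_dvd_B:
  assumes "q dvd A" "\<not> q dvd B"
  shows "genus_char q w (A^2 - q * w * B^2) = 1"
proof -
  obtain A1 where A1: "A = q * A1" using assms(1) by blast
  define M where "M = q * A1^2 - w * B^2"
  have "\<not> q dvd w * B" using q_not_dvd_w assms(2) q_prime prime_dvd_mult_iff by blast
  then have "\<not> q dvd w * B^2" using q_prime by (simp add: power2_eq_square prime_dvd_mult_iff)
  then have "\<not> q dvd M" using dvd_diff_right_iff[of q "q * A1^2" "w * B^2"] by (simp add: M_def)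
  then have "M \<noteq> 0" by auto
  have "[M = - w * B^2] (mod q)" by (simp add: M_def cong_iff_dvd_diff)
  then have "genus_char q w (q * M) = Legendre (- w) q * Legendre (- w * B^2) q"
    using genus_char_mult[of q M] \<open>M \<noteq> 0\<close> q_gt_2 genus_char_self
      genus_char_not_dvd[OF \<open>\<not> q dvd M\<close>] Legendre_cong by simp
  also have "\<dots> = Legendre ((w * B)^2) q"
    by (simp add: Legendre_mult[OF q_prime q_gt_2, symmetric] power2_eq_square algebra_simps)
  also have "\<dots> = 1" using Legendre_square[OF q_prime \<open>\<not> q dvd w * B\<close>] .
  also have "q * M = A^2 - q * w * B^2" by (simp add: M_def A1 power2_eq_square algebra_simps)
  finally show ?thesis .
qed

text \<open>If \<open>q\<close> divides both
  \<open>A\<close> and \<open>B\<close>, the value is \<open>q\<^sup>2\<close> times a smaller value, so the proof is a descent on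
  \<open>|A| + |B|\<close>.\<close>
lemma genus_char_norm_form:
  assumes "A^2 - q * w * B^2 \<noteq> 0"
  shows "genus_char q w (A^2 - q * w * B^2) = 1"
  using assms
proof (induction "nat (\<bar>A\<bar> + \<bar>B\<bar>)" arbitrary: A B rule: less_induct)
  case less
  show ?case
  proof (cases "q dvd A \<and> q dvd B")
    case True
    then obtain A1 B1 where A1: "A = q * A1" and B1: "B = q * B1" by blast
    have N: "A^2 - q * w * B^2 = q^2 * (A1^2 - q * w * B1^2)"
      by (simp add: A1 B1 power2_eq_square algebra_simps)
    then have M0: "A1^2 - q * w * B1^2 \<noteq> 0" using less.prems by auto
    then have "(A1, B1) \<noteq> (0, 0)" by auto
    then have "1 * (\<bar>A1\<bar> + \<bar>B1\<bar>) < q * (\<bar>A1\<bar> + \<bar>B1\<bar>)"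
      using q_gt_2 by (intro mult_strict_right_mono) auto
    also have "\<dots> = \<bar>A\<bar> + \<bar>B\<bar>" using A1 B1 q_gt_2 by (simp add: abs_mult algebra_simps)
    finally have "genus_char q w (A1^2 - q * w * B1^2) = 1"
      using less.hyps[OF _ M0] by simp
    moreover have "genus_char q w (q^2) = 1"
      using genus_char_mult[of q q] genus_char_self Legendre_minus_w_cases q_gt_2
      by (auto simp: power2_eq_square)
    ultimately show ?thesis using N genus_char_mult[OF _ M0, of "q^2"] q_gt_2 by simp
  qed (use genus_char_norm_form_not_dvd_A genus_char_norm_form_not_dvd_B in blast)
qed

end

section \<open>The ring of integers of a real quadratic field\<close>

lemma of_real_of_rat_complex: "complex_of_real (of_rat q) = of_rat q"
  by (cases q) (simp add: of_rat_rat)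

locale real_quadratic_field =
  fixes m :: int
  assumes m_gt_1: "m > 1" and m_squarefree: "squarefree m"
begin

definition \<rho> :: real where "\<rho> = sqrt (real_of_int m)"

definition \<omega> :: complex where "\<omega> = complex_of_real \<rho>"

lemma \<rho>_pos: "\<rho> > 0"
  using m_gt_1 by (simp add: \<rho>_def)

lemma \<rho>_square: "\<rho> * \<rho> = real_of_int m"
  using m_gt_1 by (simp add: \<rho>_def)

lemma \<omega>_square: "\<omega> * \<omega> = of_int m"
  unfolding \<omega>_def by (metis of_real_mult \<rho>_square of_real_of_int_eq)

lemma csqrt_m: "csqrt (of_int m) = \<omega>"
  using m_gt_1 csqrt_of_real[of "real_of_int m"] by (simp add: \<omega>_def \<rho>_def)

lemma m_nonsquare: "m * b^2 = a^2 \<Longrightarrow> b = 0"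
  using squarefree_mult_square_eq_square[OF m_squarefree m_gt_1] by blast

lemma \<rho>_irrational: "\<rho> \<notin> \<rat>"
proof
  assume "\<rho> \<in> \<rat>"
  then obtain p q where "q > 0" and "\<rho> = of_int p / of_int q"
    by (auto elim: Rats_cases')
  then have "real_of_int p * real_of_int p = real_of_int q * real_of_int q * (\<rho> * \<rho>)"
    by (simp add: field_simps)
  then have "real_of_int (m * q^2) = real_of_int (p^2)"
    by (simp add: \<rho>_square power2_eq_square mult_ac)
  then have "q = 0" using m_nonsquare of_int_eq_iff by blast
  then show False using \<open>q > 0\<close> by simp
qed

lemma Rats_linear_independent_\<omega>:
  assumes "a \<in> \<rat>" "b \<in> \<rat>" "a + b * \<omega> = 0"
  shows "a = 0 \<and> b = 0"
proof -
  obtain a' b' where a': "a = of_rat a'" and b': "b = of_rat b'"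
    using assms(1,2) by (auto elim!: Rats_cases)
  have "complex_of_real (of_rat a' + of_rat b' * \<rho>) = 0"
    using assms(3) by (simp add: a' b' \<omega>_def flip: of_real_of_rat_complex)
  then have "(of_rat a' :: real) + of_rat b' * \<rho> = 0" by (simp only: of_real_eq_0_iff)
  moreover have "\<rho> \<noteq> - of_rat a' / of_rat b'" if "b' \<noteq> 0"
    using \<rho>_irrational by auto
  ultimately have "b' = 0" by (auto simp: field_simps add_eq_0_iff)
  then show ?thesis using \<open>_ + _ * \<rho> = 0\<close> by (simp add: a' b')
qed

text \<open>\<open>elt A B\<close> stands for \<open>(A + B\<surd>m)/2\<close>; these are the integers of \<open>\<rat>(\<surd>m)\<close> when
  \<open>A\<^sup>2 - m B\<^sup>2 \<equiv> 0 (mod 4)\<close>.\<close>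
definition elt :: "int \<Rightarrow> int \<Rightarrow> complex" where
  "elt A B = (of_int A + of_int B * \<omega>) / 2"

definition ints :: "complex set" where
  "ints = {elt A B | A B. 4 dvd (A^2 - m * B^2)}"

lemma elt_eq_iff: "elt A B = elt C D \<longleftrightarrow> A = C \<and> B = D"
proof
  assume "elt A B = elt C D"
  then have "of_int A + of_int B * \<omega> = of_int C + of_int D * \<omega>"
    unfolding elt_def by (metis divide_cancel_right zero_neq_numeral)
  then have "of_int (A - C) + of_int (B - D) * \<omega> = 0"
    by (simp add: algebra_simps)
  then have "(of_int (A - C) :: complex) = 0 \<and> (of_int (B - D) :: complex) = 0"
    by (intro Rats_linear_independent_\<omega>) auto
  then show "A = C \<and> B = D" by simp
qed simp

lemma elt_add: "elt A B + elt C D = elt (A + C) (B + D)"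
  by (simp add: elt_def algebra_simps add_divide_distrib)

lemma elt_diff: "elt A B - elt C D = elt (A - C) (B - D)"
  by (simp add: elt_def algebra_simps diff_divide_distrib)

lemma elt_uminus: "- elt A B = elt (- A) (- B)"
  by (simp add: elt_def algebra_simps)

lemma elt_eq_0_iff: "elt A B = 0 \<longleftrightarrow> A = 0 \<and> B = 0"
  using elt_eq_iff[of A B 0 0] by (simp add: elt_def)

lemma of_int_eq_elt: "of_int n = elt (2 * n) 0"
  by (simp add: elt_def)

lemma \<omega>_eq_elt: "\<omega> = elt 0 2"
  by (simp add: elt_def)

lemma of_int_mult_elt: "of_int n * elt A B = elt (n * A) (n * B)"
  by (simp add: elt_def field_simps)

lemma \<omega>_mult_elt: "\<omega> * elt A B = elt (m * B) A"
  by (simp add: elt_def algebra_simps \<omega>_square flip: mult.assoc)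

lemma elt_mult_even:
  assumes "even (A * C + m * B * D)" "even (A * D + B * C)"
  shows "elt A B * elt C D = elt ((A * C + m * B * D) div 2) ((A * D + B * C) div 2)"
proof -
  have half: "(of_int (X div 2) :: complex) = of_int X / 2" if "even X" for X :: int
    using that by (auto elim!: evenE)
  have "elt A B * elt C D = (of_int A * of_int C + of_int B * of_int D * (\<omega> * \<omega>)
      + (of_int A * of_int D + of_int B * of_int C) * \<omega>) / 4"
    by (simp add: elt_def field_simps)
  also have "\<dots> = (of_int (A * C + m * B * D) + of_int (A * D + B * C) * \<omega>) / 4"
    by (simp add: \<omega>_square algebra_simps)
  finally show ?thesis
    unfolding elt_def half[OF assms(1)] half[OF assms(2)] by (simp add: field_simps)
qed

lemma elt_parity:
  assumes "4 dvd (A^2 - m * B^2)"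
  shows "(even A \<and> even B) \<or> (odd A \<and> odd B \<and> m mod 4 = 1)"
proof -
  have no4: "\<not> 4 dvd (4 * X + 1)" for X :: int by presburger
  consider "even A" "even B" | "odd A" "even B" | "even A" "odd B" | "odd A" "odd B"
    by blast
  then show ?thesis
  proof cases
    case 2
    then obtain a b where "A = 2 * a + 1" "B = 2 * b" by (metis evenE oddE)
    then have "A^2 - m * B^2 = 4 * (a^2 + a - m * b^2) + 1"
      by (simp add: power2_eq_square algebra_simps)
    then show ?thesis using assms no4 by metis
  next
    case 3
    then obtain a b where "A = 2 * a" "B = 2 * b + 1" by (metis evenE oddE)
    then have "m = 4 * (a^2 - m * b^2 - m * b) - (A^2 - m * B^2)"
      by (simp add: power2_eq_square algebra_simps)
    then have "2^2 dvd m" using assms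
      by (metis dvd_diff dvd_triv_left power2_eq_square numeral_Bit0 mult_2)
    then show ?thesis using m_squarefree squarefreeD[of m 2] by auto
  next
    case 4
    then obtain a b where "A = 2 * a + 1" "B = 2 * b + 1" by (metis oddE)
    then have "1 - m = (A^2 - m * B^2) - 4 * (a^2 + a - m * b^2 - m * b)"
      by (simp add: power2_eq_square algebra_simps)
    then have "4 dvd (1 - m)" using assms by (metis dvd_diff dvd_triv_left)
    then show ?thesis using 4 by presburger
  qed simp
qed

lemma elt_mult:
  assumes "4 dvd (A^2 - m * B^2)" "4 dvd (C^2 - m * D^2)"
  shows "even (A * C + m * B * D)" "even (A * D + B * C)"
    and "elt A B * elt C D = elt ((A * C + m * B * D) div 2) ((A * D + B * C) div 2)"
proof -
  show ev: "even (A * C + m * B * D)" "even (A * D + B * C)"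
    using elt_parity[OF assms(1)] elt_parity[OF assms(2)] by (auto simp: mod2_eq_if, presburger+)
  show "elt A B * elt C D = elt ((A * C + m * B * D) div 2) ((A * D + B * C) div 2)"
    using elt_mult_even[OF ev] .
qed

lemma elt_mult_norm_form:
  assumes "4 dvd (A^2 - m * B^2)" "4 dvd (C^2 - m * D^2)"
  shows "((A * C + m * B * D) div 2)^2 - m * ((A * D + B * C) div 2)^2
    = 4 * (((A^2 - m * B^2) div 4) * ((C^2 - m * D^2) div 4))"
proof -
  obtain A' where A': "A * C + m * B * D = 2 * A'" using elt_mult(1)[OF assms] by (metis dvdE)
  obtain B' where B': "A * D + B * C = 2 * B'" using elt_mult(2)[OF assms] by (metis dvdE)
  obtain N1 N2 where N1: "A^2 - m * B^2 = 4 * N1" and N2: "C^2 - m * D^2 = 4 * N2"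
    using assms by (auto elim!: dvdE)
  have "(A * C + m * B * D)^2 - m * (A * D + B * C)^2 = (A^2 - m * B^2) * (C^2 - m * D^2)"
    by (simp add: power2_eq_square algebra_simps)
  then have "(2 * A')^2 - m * (2 * B')^2 = (4 * N1) * (4 * N2)"
    unfolding A' B' N1 N2 .
  then have "4 * (A'^2 - m * B'^2) = 4 * (4 * (N1 * N2))"
    by (simp add: power2_eq_square algebra_simps)
  then show ?thesis by (simp add: A' B' N1 N2)
qed

lemma ints_elt [intro]: "4 dvd (A^2 - m * B^2) \<Longrightarrow> elt A B \<in> ints"
  unfolding ints_def by blast

lemma intsE [elim]:
  assumes "x \<in> ints"
  obtains A B where "x = elt A B" "4 dvd (A^2 - m * B^2)"
  using assms unfolding ints_def by blast

lemma ints_mult: "x \<in> ints \<Longrightarrow> y \<in> ints \<Longrightarrow> x * y \<in> ints"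
  by (elim intsE) (auto simp: elt_mult(3) elt_mult_norm_form)

lemma ints_add:
  assumes "x \<in> ints" "y \<in> ints"
  shows "x + y \<in> ints"
proof -
  obtain A B C D where x: "x = elt A B" "4 dvd (A^2 - m * B^2)"
    and y: "y = elt C D" "4 dvd (C^2 - m * D^2)"
    using assms by (elim intsE)
  obtain k where k: "A * C + m * B * D = 2 * k"
    using elt_mult(1)[OF x(2) y(2)] by (metis dvdE)
  have "(A + C)^2 - m * (B + D)^2
      = (A^2 - m * B^2) + (C^2 - m * D^2) + 2 * (A * C + m * B * D) - 4 * (m * B * D)"
    by (simp add: power2_eq_square algebra_simps)
  also have "\<dots> = (A^2 - m * B^2) + (C^2 - m * D^2) + 4 * (k - m * B * D)"
    by (simp only: k) (simp add: algebra_simps)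
  finally have "4 dvd ((A + C)^2 - m * (B + D)^2)" using x(2) y(2) by simp
  then show ?thesis by (auto simp: x(1) y(1) elt_add)
qed

lemma ints_uminus: "x \<in> ints \<Longrightarrow> - x \<in> ints"
  by (elim intsE) (auto simp: elt_uminus)

lemma ints_diff: "x \<in> ints \<Longrightarrow> y \<in> ints \<Longrightarrow> x - y \<in> ints"
  using ints_add[of x "- y"] ints_uminus[of y] by simp

lemma ints_of_int [simp, intro]: "of_int n \<in> ints"
  by (auto simp: of_int_eq_elt power2_eq_square)

lemma ints_0 [simp, intro]: "0 \<in> ints"
  using ints_of_int[of 0] by simp

lemma ints_1 [simp, intro]: "1 \<in> ints"
  using ints_of_int[of 1] by simp

lemma ints_\<omega> [simp, intro]: "\<omega> \<in> ints"
  by (auto simp: \<omega>_eq_elt)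

lemma ints_subset_quad_ints: "ints \<subseteq> quad_ints m"
proof
  fix x assume "x \<in> ints"
  then obtain A B N where x: "x = elt A B" and N: "A^2 - m * B^2 = 4 * N"
    by (auto elim!: intsE dvdE)
  have "x \<in> quad_field m"
    unfolding quad_field_def csqrt_m
    by (rule CollectI, rule exI[of _ "of_int A / 2"], rule exI[of _ "of_int B / 2"])
       (simp add: x elt_def add_divide_distrib)
  moreover have "poly (map_poly complex_of_int [:N, - A, 1:]) x = 0"
  proof -
    have "(of_int N :: complex) = (of_int A ^ 2 - of_int m * of_int B ^ 2) / 4"
      using arg_cong[OF N, of "of_int :: int \<Rightarrow> complex"] by simp
    then show ?thesis
      by (simp add: map_poly_pCons x elt_def field_simps power2_eq_square \<omega>_square[symmetric])
  qed
  then have "is_alg_int x"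
    unfolding is_alg_int_def by (intro exI[of _ "[:N, -A, 1:]"]) simp
  ultimately show "x \<in> quad_ints m" by (simp add: quad_ints_def)
qed

lemma of_rat_add_mult_\<omega>_in_Rats_iff: "of_rat a + of_rat b * \<omega> \<in> \<rat> \<longleftrightarrow> b = 0"
proof
  assume "of_rat a + of_rat b * \<omega> \<in> \<rat>"
  then have "of_rat a - (of_rat a + of_rat b * \<omega>) \<in> \<rat>" by (intro Rats_diff) auto
  moreover have "(of_rat a - (of_rat a + of_rat b * \<omega>)) + of_rat b * \<omega> = 0" by simp
  ultimately have "(of_rat b :: complex) = 0"
    using Rats_linear_independent_\<omega>[OF _ Rats_of_rat] by blast
  then show "b = 0" by simp
qed simp

text \<open>Here \<open>m (2b)\<^sup>2\<close> is an integer, so \<open>2b\<close> is one because \<open>m\<close> is squarefree.\<close>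
lemma ints_if_trace_norm_Ints:
  fixes a b :: rat
  assumes "2 * a \<in> \<int>" "a^2 - of_int m * b^2 \<in> \<int>"
  shows "of_rat a + of_rat b * \<omega> \<in> ints"
proof -
  obtain A N where A: "2 * a = of_int A" and N: "a^2 - of_int m * b^2 = of_int N"
    using assms by (auto elim!: Ints_cases)
  have "of_int m * (2 * b)^2 = of_int (A^2 - 4 * N)"
    by (simp add: A[symmetric] N[symmetric] power2_eq_square algebra_simps)
  then have "of_int m * (2 * b)^2 \<in> \<int>" by (metis Ints_of_int)
  then have "2 * b \<in> \<int>" by (rule Ints_if_squarefree_mult_square[OF m_squarefree])
  then obtain B where B: "2 * b = of_int B" by (auto elim: Ints_cases)
  have "of_int (A^2 - m * B^2) = (of_int (4 * N) :: rat)"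
    by (simp add: A[symmetric] B[symmetric] N[symmetric] power2_eq_square algebra_simps)
  then have "4 dvd (A^2 - m * B^2)" by (simp only: of_int_eq_iff) simp
  moreover have "a = of_int A / 2" "b = of_int B / 2" using A B by auto
  then have e: "(of_rat a :: complex) = of_int A / 2" "(of_rat b :: complex) = of_int B / 2"
    by (simp_all only: of_rat_divide of_rat_of_int_eq of_rat_numeral_eq)
  have "of_rat a + of_rat b * \<omega> = elt A B" unfolding e elt_def by (simp add: add_divide_distrib)
  ultimately show ?thesis by auto
qed

lemma quad_ints_subset_ints: "quad_ints m \<subseteq> ints"
proof
  fix x assume "x \<in> quad_ints m"
  then obtain a b p where x: "x = of_rat a + of_rat b * \<omega>"
    and p: "lead_coeff p = 1" "poly (map_poly complex_of_int p) x = 0"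
    unfolding quad_ints_def quad_field_def is_alg_int_def csqrt_m by (auto elim!: Rats_cases)
  show "x \<in> ints"
  proof (cases "b = 0")
    case True
    then have "x \<in> \<rat>" using x by simp
    moreover have "algebraic_int x" using p by (subst algebraic_int_altdef_ipoly) blast
    ultimately have "x \<in> \<int>" using rational_algebraic_int_is_int by blast
    then show ?thesis by (auto elim!: Ints_cases)
  next
    case False
    then have "x \<notin> \<rat>" using x of_rat_add_mult_\<omega>_in_Rats_iff by simp
    moreover have "poly (map_poly of_rat [:a^2 - of_int m * b^2, - 2 * a, 1:]) x = 0"
      by (simp add: x map_poly_pCons of_rat_diff of_rat_mult of_rat_power of_rat_minus
          power2_eq_square algebra_simps \<omega>_square)
    ultimately have "- 2 * a \<in> \<int>" "a^2 - of_int m * b^2 \<in> \<int>"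
      using algebraic_int_quadratic_coeffs_Ints[OF p] by blast+
    then show ?thesis unfolding x
      by (intro ints_if_trace_norm_Ints) (metis Ints_minus minus_minus mult_minus_left)
  qed
qed

theorem quad_ints_eq: "quad_ints m = ints"
  using ints_subset_quad_ints quad_ints_subset_ints by blast

text \<open>Coordinates of \<open>x = elt A B\<close>; \<open>tr x = A\<close> is the trace. Outside \<open>ints\<close> the values are
  unspecified.\<close>
definition tr :: "complex \<Rightarrow> int" where "tr x = (THE A. \<exists>B. x = elt A B)"

definition sc :: "complex \<Rightarrow> int" where "sc x = (THE B. \<exists>A. x = elt A B)"

lemma tr_elt [simp]: "tr (elt A B) = A"
  unfolding tr_def by (rule the_equality) (auto simp: elt_eq_iff)
lemma sc_elt [simp]: "sc (elt A B) = B"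
  unfolding sc_def by (rule the_equality) (auto simp: elt_eq_iff)

lemma ints_coords: "x \<in> ints \<Longrightarrow> x = elt (tr x) (sc x)"
  by (erule intsE) simp

lemma ints_norm_form_dvd: "x \<in> ints \<Longrightarrow> 4 dvd (tr x ^ 2 - m * sc x ^ 2)"
  by (erule intsE) simp

definition qnorm :: "complex \<Rightarrow> int" where "qnorm x = (tr x ^ 2 - m * sc x ^ 2) div 4"

definition qconj :: "complex \<Rightarrow> complex" where "qconj x = elt (tr x) (- sc x)"

lemma four_qnorm: "x \<in> ints \<Longrightarrow> 4 * qnorm x = tr x ^ 2 - m * sc x ^ 2"
  using ints_norm_form_dvd unfolding qnorm_def by simp

lemma qconj_ints: "x \<in> ints \<Longrightarrow> qconj x \<in> ints"
  unfolding qconj_def using ints_norm_form_dvd by (intro ints_elt) simp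

lemma tr_qconj [simp]: "tr (qconj x) = tr x" by (simp add: qconj_def)
lemma sc_qconj [simp]: "sc (qconj x) = - sc x" by (simp add: qconj_def)

lemma qconj_qconj: "x \<in> ints \<Longrightarrow> qconj (qconj x) = x"
  using ints_coords[of x] by (simp add: qconj_def)

lemma qnorm_qconj [simp]: "qnorm (qconj x) = qnorm x"
  by (simp add: qnorm_def)

lemma mult_qconj: "x \<in> ints \<Longrightarrow> x * qconj x = of_int (qnorm x)"
proof -
  assume x: "x \<in> ints"
  define A where "A = tr x"
  define B where "B = sc x"
  have d: "4 dvd (A^2 - m * B^2)" using ints_norm_form_dvd[OF x] by (simp add: A_def B_def)
  have d': "4 dvd (A^2 - m * (-B)^2)" using d by simp
  have "x * qconj x = elt A B * elt A (- B)"
    using ints_coords[OF x] by (simp add: qconj_def A_def B_def)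
  also have "\<dots> = elt ((A * A + m * B * (- B)) div 2) ((A * (- B) + B * A) div 2)"
    by (rule elt_mult(3)[OF d d'])
  also have "\<dots> = elt ((A^2 - m * B^2) div 2) 0" by (simp add: power2_eq_square algebra_simps)
  also have "\<dots> = of_int ((A^2 - m * B^2) div 4)"
  proof -
    obtain N where N: "A^2 - m * B^2 = 4 * N" using d by blast
    show ?thesis by (simp add: N of_int_eq_elt)
  qed
  also have "\<dots> = of_int (qnorm x)" by (simp add: qnorm_def A_def B_def)
  finally show ?thesis .
qed

lemma add_qconj: "x \<in> ints \<Longrightarrow> x + qconj x = of_int (tr x)"
proof -
  assume x: "x \<in> ints"
  have "x + qconj x = elt (tr x) (sc x) + elt (tr x) (- sc x)"
    using ints_coords[OF x] by (simp add: qconj_def)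
  also have "\<dots> = elt (2 * tr x) 0" by (simp add: elt_add)
  finally show ?thesis by (simp add: of_int_eq_elt)
qed

lemma ints_add_coords:
  assumes "x \<in> ints" "y \<in> ints"
  shows "tr (x + y) = tr x + tr y" "sc (x + y) = sc x + sc y"
  by (subst ints_coords[OF assms(1)], subst ints_coords[OF assms(2)], simp add: elt_add)+

lemma ints_int_mult_coords:
  assumes "x \<in> ints"
  shows "tr (of_int n * x) = n * tr x" "sc (of_int n * x) = n * sc x"
  by (subst ints_coords[OF assms], simp add: of_int_mult_elt)+

lemma qnorm_mult:
  assumes x: "x \<in> ints" and y: "y \<in> ints"
  shows "qnorm (x * y) = qnorm x * qnorm y"
proof -
  have dx: "4 dvd (tr x^2 - m * sc x^2)" and dy: "4 dvd (tr y^2 - m * sc y^2)"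
    using ints_norm_form_dvd x y by auto
  have xy: "x * y = elt ((tr x * tr y + m * sc x * sc y) div 2) ((tr x * sc y + sc x * tr y) div 2)"
    using elt_mult(3)[OF dx dy] ints_coords[OF x] ints_coords[OF y] by simp
  show ?thesis
    unfolding qnorm_def xy tr_elt sc_elt elt_mult_norm_form[OF dx dy] by simp
qed

lemma qconj_mult:
  assumes x: "x \<in> ints" and y: "y \<in> ints"
  shows "qconj (x * y) = qconj x * qconj y"
proof -
  have dx: "4 dvd (tr x^2 - m * sc x^2)" and dy: "4 dvd (tr y^2 - m * sc y^2)"
    using ints_norm_form_dvd x y by auto
  have dx': "4 dvd (tr x^2 - m * (- sc x)^2)" and dy': "4 dvd (tr y^2 - m * (- sc y)^2)"
    using dx dy by auto
  have xy: "x * y = elt ((tr x * tr y + m * sc x * sc y) div 2) ((tr x * sc y + sc x * tr y) div 2)"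
    using elt_mult(3)[OF dx dy] ints_coords[OF x] ints_coords[OF y] by simp
  have ev: "even (tr x * sc y + sc x * tr y)"
    using elt_mult(2)[OF dx dy] by (simp add: mult.commute)
  have "qconj x * qconj y
      = elt ((tr x * tr y + m * (- sc x) * (- sc y)) div 2) ((tr x * (- sc y) + (- sc x) * tr y) div 2)"
    unfolding qconj_def by (rule elt_mult(3)[OF dx' dy'])
  also have "\<dots> = elt ((tr x * tr y + m * sc x * sc y) div 2) (- ((tr x * sc y + sc x * tr y) div 2))"
  proof -
    obtain k where k: "tr x * sc y + sc x * tr y = 2 * k" using ev by blast
    have "tr x * (- sc y) + (- sc x) * tr y = 2 * (- k)" using k by (simp add: algebra_simps)
    then have e1: "(tr x * (- sc y) + (- sc x) * tr y) div 2 = - k" by simp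
    have e2: "(tr x * sc y + sc x * tr y) div 2 = k" using k by simp
    show ?thesis unfolding e1 e2 by simp
  qed
  also have "\<dots> = qconj (x * y)" by (simp add: xy qconj_def)
  finally show ?thesis by simp
qed

lemma qconj_add:
  assumes x: "x \<in> ints" and y: "y \<in> ints"
  shows "qconj (x + y) = qconj x + qconj y"
  using ints_add_coords[OF x y] by (simp add: qconj_def elt_add)

lemma qnorm_of_int [simp]: "qnorm (of_int n) = n^2"
  by (simp add: of_int_eq_elt qnorm_def power2_eq_square)

lemma qnorm_\<omega>: "qnorm \<omega> = - m"
  by (simp add: \<omega>_eq_elt qnorm_def)

lemma qnorm_eq_0_iff:
  assumes x: "x \<in> ints" shows "qnorm x = 0 \<longleftrightarrow> x = 0"
proof
  assume "qnorm x = 0"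
  then have "tr x ^ 2 = m * sc x ^ 2" using four_qnorm[OF x] by simp
  then have "sc x = 0" using m_nonsquare[of "sc x" "tr x"] by simp
  then have "tr x = 0" using \<open>tr x ^ 2 = m * sc x ^ 2\<close> by simp
  then show "x = 0" using ints_coords[OF x] \<open>sc x = 0\<close> by (simp add: elt_eq_0_iff)
next
  assume "x = 0"
  then show "qnorm x = 0" using qnorm_of_int[of 0] by simp
qed

lemma qnorm_add:
  assumes x: "x \<in> ints" and y: "y \<in> ints"
  shows "qnorm (x + y) = qnorm x + qnorm y + tr (x * qconj y)"
proof -
  have xy: "x * qconj y \<in> ints" using x y by (simp add: ints_mult qconj_ints)
  have "qconj (x * qconj y) = qconj x * y"
    using qconj_mult[OF x qconj_ints[OF y]] qconj_qconj[OF y] by simp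
  then have tr: "x * qconj y + qconj x * y = of_int (tr (x * qconj y))"
    using add_qconj[OF xy] by simp
  have "(of_int (qnorm (x + y)) :: complex) = (x + y) * qconj (x + y)"
    using mult_qconj[OF ints_add[OF x y]] by simp
  also have "\<dots> = x * qconj x + y * qconj y + (x * qconj y + qconj x * y)"
    by (simp add: qconj_add[OF x y] algebra_simps)
  also have "\<dots> = of_int (qnorm x + qnorm y + tr (x * qconj y))"
    by (simp add: mult_qconj[OF x] mult_qconj[OF y] tr)
  finally show ?thesis by (simp only: of_int_eq_iff)
qed

lemma even_if_elt_0_in_ints:
  assumes "elt A 0 \<in> ints" shows "even A"
proof -
  have "4 dvd (A^2 - m * 0^2)" using ints_norm_form_dvd[OF assms] by simp
  then have "2 * 2 dvd A^2" by simp
  then have "2 dvd A^2" using dvd_mult_left by blast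
  then show ?thesis by simp
qed

lemma ints_div:
  assumes x: "x \<in> ints" and g: "g > 0" and dA: "g dvd tr x" and dN: "g^2 dvd qnorm x"
  shows "x / of_int g \<in> ints"
proof -
  obtain a where a: "tr x = g * a" using dA by blast
  obtain n where n: "qnorm x = g^2 * n" using dN by blast
  have "m * sc x ^ 2 = tr x ^ 2 - 4 * qnorm x" using four_qnorm[OF x] by simp
  also have "\<dots> = g^2 * (a^2 - 4 * n)" by (simp add: a n power2_eq_square algebra_simps)
  finally have "g^2 dvd m * sc x ^ 2" by simp
  then have "g dvd sc x" by (rule squarefree_square_dvd_mult_square[OF m_squarefree])
  then obtain b where b: "sc x = g * b" by blast
  have "x / of_int g = elt a b"
    using ints_coords[OF x] g by (simp add: a b elt_def field_simps)
  moreover have "a^2 - m * b^2 = 4 * n"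
  proof -
    have "g^2 * (a^2 - m * b^2) = g^2 * (4 * n)"
      using four_qnorm[OF x] by (simp add: a b n power2_eq_square algebra_simps)
    then show ?thesis using g by simp
  qed
  ultimately show ?thesis by (simp add: ints_elt)
qed

end

section \<open>Ideals and the finiteness of the class group\<close>

lemma image_mult_image_mult:
  "(\<lambda>x. a * x) ` ((\<lambda>x. b * x) ` S) = (\<lambda>x. (a * b) * x) ` (S :: 'a::semigroup_mult set)"
  by (auto simp: image_image mult.assoc)

lemma equiv_ideal_equiv:
  assumes one: "1 \<in> R" and mult: "\<And>a b. a \<in> R \<Longrightarrow> b \<in> R \<Longrightarrow> a * b \<in> R"
  shows "equiv (nonzero_ideals R) (ideal_equiv R)"
proof (rule equivI)
  show "refl_on (nonzero_ideals R) (ideal_equiv R)"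
  proof (unfold refl_on_def, intro conjI ballI)
    fix I assume "I \<in> nonzero_ideals R"
    then show "(I, I) \<in> ideal_equiv R"
      unfolding ideal_equiv_def using one by (intro CollectI case_prodI conjI bexI[of _ 1]) simp_all
  qed
  show "sym (ideal_equiv R)"
  proof (rule symI)
    fix I J assume "(I, J) \<in> ideal_equiv R"
    then obtain a b where "a \<in> R" "b \<in> R" "a \<noteq> 0" "b \<noteq> 0" "(\<lambda>x. a * x) ` I = (\<lambda>x. b * x) ` J"
      and "I \<in> nonzero_ideals R" "J \<in> nonzero_ideals R"
      unfolding ideal_equiv_def by blast
    then show "(J, I) \<in> ideal_equiv R"
      unfolding ideal_equiv_def
        by (intro CollectI case_prodI conjI bexI[of _ b] bexI[of _ a]) simp_all
  qed
  show "trans (ideal_equiv R)"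
  proof (rule transI)
    fix I J K assume IJ: "(I, J) \<in> ideal_equiv R" and JK: "(J, K) \<in> ideal_equiv R"
    from IJ obtain a b where ab: "a \<in> R" "b \<in> R" "a \<noteq> 0" "b \<noteq> 0" "(\<lambda>x. a * x) ` I = (\<lambda>x. b * x) ` J"
      and "I \<in> nonzero_ideals R" unfolding ideal_equiv_def by blast
    from JK obtain c d where cd: "c \<in> R" "d \<in> R" "c \<noteq> 0" "d \<noteq> 0" "(\<lambda>x. c * x) ` J = (\<lambda>x. d * x) ` K"
      and "K \<in> nonzero_ideals R" unfolding ideal_equiv_def by blast
    have "(\<lambda>x. (c * a) * x) ` I = (\<lambda>x. c * x) ` ((\<lambda>x. a * x) ` I)"
      by (simp add: image_mult_image_mult)
    also have "\<dots> = (\<lambda>x. (c * b) * x) ` J"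
      by (simp add: ab(5) image_mult_image_mult)
    also have "\<dots> = (\<lambda>x. b * x) ` ((\<lambda>x. c * x) ` J)"
      by (simp only: image_mult_image_mult mult.commute[of c b])
    also have "\<dots> = (\<lambda>x. (b * d) * x) ` K"
      by (simp add: cd(5) image_mult_image_mult)
    moreover have "c * a \<in> R" "b * d \<in> R" "c * a \<noteq> 0" "b * d \<noteq> 0"
      using ab cd mult by auto
    ultimately show "(I, K) \<in> ideal_equiv R"
      unfolding ideal_equiv_def using \<open>I \<in> _\<close> \<open>K \<in> _\<close>
      by (intro CollectI case_prodI conjI bexI[of _ "c * a"] bexI[of _ "b * d"]) simp_all
  qed
qed (auto simp: ideal_equiv_def)

context real_quadratic_field
begin

abbreviation is_ideal :: "complex set \<Rightarrow> bool" where
  "is_ideal I \<equiv> is_ideal_in ints I"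

lemma is_ideal_subset: "is_ideal I \<Longrightarrow> I \<subseteq> ints"
  by (simp add: is_ideal_in_def)

lemma is_ideal_0: "is_ideal I \<Longrightarrow> 0 \<in> I"
  by (simp add: is_ideal_in_def)

lemma is_ideal_add: "is_ideal I \<Longrightarrow> x \<in> I \<Longrightarrow> y \<in> I \<Longrightarrow> x + y \<in> I"
  by (simp add: is_ideal_in_def)

lemma is_ideal_diff: "is_ideal I \<Longrightarrow> x \<in> I \<Longrightarrow> y \<in> I \<Longrightarrow> x - y \<in> I"
  by (simp add: is_ideal_in_def)

lemma is_ideal_mult: "is_ideal I \<Longrightarrow> c \<in> ints \<Longrightarrow> x \<in> I \<Longrightarrow> c * x \<in> I"
  by (simp add: is_ideal_in_def)

lemma is_ideal_mult_int: "is_ideal I \<Longrightarrow> x \<in> I \<Longrightarrow> of_int n * x \<in> I"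
  by (simp add: is_ideal_mult)

lemma is_ideal_mem: "is_ideal I \<Longrightarrow> x \<in> I \<Longrightarrow> x \<in> ints"
  using is_ideal_subset by blast

lemma is_ideal_qnorm:
  assumes "is_ideal I" "x \<in> I"
  shows "of_int (qnorm x) \<in> I"
  using is_ideal_mult[OF assms(1) qconj_ints[OF is_ideal_mem[OF assms]] assms(2)]
    mult_qconj[OF is_ideal_mem[OF assms]] by (simp add: mult.commute)

lemma equiv_ideal_equiv_ints: "equiv (nonzero_ideals ints) (ideal_equiv ints)"
  by (rule equiv_ideal_equiv) (auto intro: ints_mult)

text \<open>For a nonzero ideal this is in fact its absolute norm, but only the following properties
  are needed.\<close>
definition norm_gcd :: "complex set \<Rightarrow> int" where
  "norm_gcd I = Gcd (qnorm ` I)"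

lemma norm_gcd_dvd: "x \<in> I \<Longrightarrow> norm_gcd I dvd qnorm x"
  unfolding norm_gcd_def by (rule Gcd_dvd) simp

lemma dvd_norm_gcd: "(\<And>x. x \<in> I \<Longrightarrow> d dvd qnorm x) \<Longrightarrow> d dvd norm_gcd I"
  unfolding norm_gcd_def by (rule Gcd_greatest) auto

lemma norm_gcd_nonneg: "norm_gcd I \<ge> 0"
  unfolding norm_gcd_def by simp

lemma norm_gcd_pos:
  assumes "is_ideal I" "I \<noteq> {0}"
  shows "norm_gcd I > 0"
proof -
  obtain x where x: "x \<in> I" "x \<noteq> 0" using assms is_ideal_0 by blast
  then have "qnorm x \<noteq> 0" using qnorm_eq_0_iff is_ideal_mem assms(1) by blast
  then have "norm_gcd I \<noteq> 0" using norm_gcd_dvd[OF x(1)] by auto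
  then show ?thesis using norm_gcd_nonneg[of I] by simp
qed

lemma norm_gcd_image_mult:
  assumes "\<alpha> \<in> ints" "I \<subseteq> ints"
  shows "norm_gcd ((\<lambda>x. \<alpha> * x) ` I) = \<bar>qnorm \<alpha>\<bar> * norm_gcd I"
proof -
  have "qnorm ` ((\<lambda>x. \<alpha> * x) ` I) = (\<lambda>n. qnorm \<alpha> * n) ` (qnorm ` I)"
    using qnorm_mult[OF assms(1)] assms(2) by (force simp: image_image)
  then have "norm_gcd ((\<lambda>x. \<alpha> * x) ` I) = normalize (qnorm \<alpha> * Gcd (qnorm ` I))"
    by (simp add: norm_gcd_def Gcd_mult)
  then show ?thesis using norm_gcd_nonneg[of I] by (simp add: norm_gcd_def abs_mult)
qed

text \<open>Multiplying an ideal by \<open>\<alpha>\<close> multiplies \<open>norm_gcd\<close> by \<open>|N(\<alpha>)|\<close>, so a multiplicative function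
  that is trivial on norms of elements is constant on ideal classes.\<close>
lemma ideal_equiv_norm_gcd_invariant:
  fixes F :: "int \<Rightarrow> int"
  assumes F_mult: "\<And>a b. a \<noteq> 0 \<Longrightarrow> b \<noteq> 0 \<Longrightarrow> F (a * b) = F a * F b"
    and F_qnorm: "\<And>\<alpha>. \<alpha> \<in> ints \<Longrightarrow> \<alpha> \<noteq> 0 \<Longrightarrow> F \<bar>qnorm \<alpha>\<bar> = 1"
    and "(I, J) \<in> ideal_equiv ints"
  shows "F (norm_gcd I) = F (norm_gcd J)"
proof -
  from assms(3) obtain \<alpha> \<beta> where I: "is_ideal I" "I \<noteq> {0}" and J: "is_ideal J" "J \<noteq> {0}"
    and ab: "\<alpha> \<in> ints" "\<beta> \<in> ints" "\<alpha> \<noteq> 0" "\<beta> \<noteq> 0" "(\<lambda>x. \<alpha> * x) ` I = (\<lambda>x. \<beta> * x) ` J"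
    unfolding ideal_equiv_def nonzero_ideals_def by blast
  have "\<bar>qnorm \<alpha>\<bar> * norm_gcd I = \<bar>qnorm \<beta>\<bar> * norm_gcd J"
    using norm_gcd_image_mult[OF ab(1) is_ideal_subset[OF I(1)]]
      norm_gcd_image_mult[OF ab(2) is_ideal_subset[OF J(1)]] ab(5) by simp
  moreover have "qnorm \<alpha> \<noteq> 0" "qnorm \<beta> \<noteq> 0" using qnorm_eq_0_iff ab by auto
  moreover have "norm_gcd I \<noteq> 0" "norm_gcd J \<noteq> 0" using norm_gcd_pos I J by (auto simp: less_le)
  ultimately have "F \<bar>qnorm \<alpha>\<bar> * F (norm_gcd I) = F \<bar>qnorm \<beta>\<bar> * F (norm_gcd J)"
    by (metis F_mult abs_0_eq)
  then show ?thesis using F_qnorm ab by simp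
qed

end

lemma int_set_least_positive_generator:
  fixes P :: "int \<Rightarrow> bool"
  assumes diff: "\<And>a b. P a \<Longrightarrow> P b \<Longrightarrow> P (a - b)"
    and mult: "\<And>a k. P a \<Longrightarrow> P (k * a)"
    and "P n1" "n1 \<noteq> 0"
  obtains n0 where "n0 > 0" "P n0" "\<And>n. P n \<Longrightarrow> n0 dvd n"
proof -
  have "P \<bar>n1\<bar>" using mult[OF \<open>P n1\<close>, of "sgn n1"] by (simp add: abs_sgn mult.commute)
  then have ex: "\<exists>k::nat. k > 0 \<and> P (int k)" using \<open>n1 \<noteq> 0\<close>
    by (intro exI[of _ "nat \<bar>n1\<bar>"]) simp
  define k0 where "k0 = (LEAST k::nat. k > 0 \<and> P (int k))"
  have k0: "k0 > 0" "P (int k0)" using LeastI_ex[OF ex] unfolding k0_def by auto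
  have "int k0 dvd n" if "P n" for n
  proof (rule ccontr)
    assume "\<not> int k0 dvd n"
    then have pos: "n mod int k0 > 0" using k0(1) by (simp add: dvd_eq_mod_eq_0 order_le_neq_trans)
    moreover have "P (n mod int k0)"
      using diff[OF \<open>P n\<close> mult[OF k0(2), of "n div int k0"]] by (simp add: minus_div_mult_eq_mod)
    ultimately have "k0 \<le> nat (n mod int k0)"
      unfolding k0_def by (intro Least_le) simp
    then have "int k0 \<le> n mod int k0" using pos by (simp add: le_nat_iff)
    moreover have "n mod int k0 < int k0" using k0(1) by simp
    ultimately show False by linarith
  qed
  then show ?thesis using that[of "int k0"] k0 by auto
qed

context real_quadratic_field
begin

lemma qnorm_eq_real_embeddings:
  assumes "x \<in> ints"
  shows "real_of_int (qnorm x) = ((tr x + sc x * \<rho>) / 2) * ((tr x - sc x * \<rho>) / 2)"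
proof -
  have "real_of_int (4 * qnorm x) = real_of_int (tr x ^ 2 - m * sc x ^ 2)"
    using four_qnorm[OF assms] by simp
  then show ?thesis by (simp add: power2_eq_square algebra_simps flip: \<rho>_square)
qed

lemma ideal_elt_0:
  assumes "is_ideal I" "elt X 0 \<in> I"
  obtains T where "X = 2 * T" "of_int T \<in> I"
proof -
  obtain T where "X = 2 * T" using even_if_elt_0_in_ints[OF is_ideal_mem[OF assms]] by blast
  then show ?thesis using that assms(2) by (simp add: of_int_eq_elt)
qed

text \<open>The standard basis \<open>I = \<int> n + \<int> (A + b\<surd>m)/2\<close> of a nonzero ideal: \<open>n\<close> is the least positive
  integer in \<open>I\<close> and \<open>b\<close> the least positive second coordinate.\<close>
definition ideal_basis :: "complex set \<Rightarrow> int \<Rightarrow> int \<Rightarrow> int \<Rightarrow> bool" where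
  "ideal_basis I n A b \<longleftrightarrow> n > 0 \<and> b > 0 \<and> of_int n \<in> I \<and> elt A b \<in> I \<and>
     (\<forall>k. of_int k \<in> I \<longrightarrow> n dvd k) \<and> (\<forall>y\<in>I. b dvd sc y)"

lemma ideal_least_int:
  assumes "is_ideal I" "I \<noteq> {0}"
  obtains n where "n > 0" "of_int n \<in> I" "\<And>k. of_int k \<in> I \<Longrightarrow> n dvd k"
proof -
  obtain x where x: "x \<in> I" "x \<noteq> 0" using assms is_ideal_0 by blast
  then have "qnorm x \<noteq> 0" using qnorm_eq_0_iff is_ideal_mem[OF assms(1)] by blast
  show ?thesis
    using int_set_least_positive_generator[of "\<lambda>n. of_int n \<in> I"] that
      is_ideal_diff[OF assms(1)] is_ideal_mult_int[OF assms(1)] is_ideal_qnorm[OF assms(1) x(1)]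
      \<open>qnorm x \<noteq> 0\<close> by (metis of_int_diff of_int_mult)
qed

lemma ideal_basis_exists:
  assumes I: "is_ideal I" "I \<noteq> {0}"
  obtains n A b where "ideal_basis I n A b"
proof -
  obtain n where n: "n > 0" "of_int n \<in> I" "\<And>k. of_int k \<in> I \<Longrightarrow> n dvd k"
    using ideal_least_int[OF I] by blast
  have "\<omega> * of_int n \<in> I" using is_ideal_mult[OF I(1) ints_\<omega> n(2)] .
  then have w0: "elt 0 (2 * n) \<in> I" by (simp add: of_int_eq_elt \<omega>_mult_elt)
  obtain b where b: "b > 0" "\<exists>A. elt A b \<in> I" "\<And>B. \<exists>A. elt A B \<in> I \<Longrightarrow> b dvd B"
  proof (rule int_set_least_positive_generator[of "\<lambda>B. \<exists>A. elt A B \<in> I"])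
    fix a b assume "\<exists>A. elt A a \<in> I" "\<exists>A. elt A b \<in> I"
    then show "\<exists>A. elt A (a - b) \<in> I" using is_ideal_diff[OF I(1)] by (metis elt_diff)
  next
    fix a k assume "\<exists>A. elt A a \<in> I"
    then show "\<exists>A. elt A (k * a) \<in> I" using is_ideal_mult_int[OF I(1)] by (metis of_int_mult_elt)
  qed (use w0 n(1) in auto)
  have "b dvd sc y" if "y \<in> I" for y
    using b(3) ints_coords[OF is_ideal_mem[OF I(1) that]] that by metis
  then show ?thesis using that n b unfolding ideal_basis_def by blast
qed

lemma ideal_basis_decompose:
  assumes I: "is_ideal I" and basis: "ideal_basis I n A b" and "y \<in> I"
  obtains u v where "sc y = b * u" "tr y = u * A + 2 * n * v"
proof -
  obtain u where u: "sc y = b * u" using basis \<open>y \<in> I\<close> unfolding ideal_basis_def by blast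
  have "y - of_int u * elt A b \<in> I"
    using basis is_ideal_diff[OF I \<open>y \<in> I\<close> is_ideal_mult_int[OF I]] unfolding ideal_basis_def
      by blast
  moreover have "y - of_int u * elt A b = elt (tr y - u * A) 0"
    using ints_coords[OF is_ideal_mem[OF I \<open>y \<in> I\<close>]] u
      by (metis elt_diff of_int_mult_elt diff_self mult.commute)
  ultimately obtain T where T: "tr y - u * A = 2 * T" "of_int T \<in> I"
    using ideal_elt_0[OF I] by metis
  then obtain v where "T = n * v" using basis unfolding ideal_basis_def by blast
  then have "tr y = u * A + 2 * n * v" using T(1) by simp
  then show ?thesis using that u by blast
qed

text \<open>Every \<open>y \<in> I\<close> is \<open>u (A + b\<surd>m)/2 + v n\<close>, and expanding its norm shows that \<open>n b\<close> divides
  \<open>2 N(y)\<close>.\<close>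
lemma ideal_basis_bound:
  assumes I: "is_ideal I" "I \<noteq> {0}" and basis: "ideal_basis I n A b"
  shows "n * b \<le> 2 * norm_gcd I"
proof -
  have n: "n > 0" "of_int n \<in> I" and b: "b > 0" and x0: "elt A b \<in> I"
    using basis unfolding ideal_basis_def by auto
  have "elt 0 (2 * n) \<in> I"
    using is_ideal_mult[OF I(1) ints_\<omega> n(2)] by (simp add: of_int_eq_elt \<omega>_mult_elt)
  then obtain e where e: "2 * n = b * e" using basis unfolding ideal_basis_def by fastforce
  have wx0: "\<omega> * elt A b \<in> I" using is_ideal_mult[OF I(1) ints_\<omega> x0] .
  then obtain a1 where a1: "A = b * a1" using basis unfolding ideal_basis_def
    by (fastforce simp: \<omega>_mult_elt)
  have "\<omega> * elt A b - of_int a1 * elt A b \<in> I"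
    using is_ideal_diff[OF I(1) wx0 is_ideal_mult_int[OF I(1) x0]] .
  then have "elt (m * b - a1 * A) (A - a1 * b) \<in> I"
    by (simp add: \<omega>_mult_elt of_int_mult_elt elt_diff)
  then have "elt (m * b - a1 * A) 0 \<in> I" using a1 by (simp add: mult.commute)
  then obtain T where T: "m * b - a1 * A = 2 * T" "of_int T \<in> I" using ideal_elt_0[OF I(1)] by metis
  have "n dvd T" using basis T(2) unfolding ideal_basis_def by blast
  then obtain t where "T = n * t" by blast
  then have mb: "m * b = a1 * A + 2 * n * t" using T(1) by simp
  have "n * b dvd qnorm y * 2" if y: "y \<in> I" for y
  proof -
    obtain u v where uv: "sc y = b * u" "tr y = u * A + 2 * n * v"
      using ideal_basis_decompose[OF I(1) basis y] .
    have "4 * qnorm y = u^2 * (A * A - b * (m * b)) + 4 * u * v * A * n + 2 * v^2 * n * (2 * n)"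
      using four_qnorm[OF is_ideal_mem[OF I(1) y]] by (simp add: uv power2_eq_square algebra_simps)
    also have "\<dots> = u^2 * (- 2 * n * b * t) + 4 * u * v * (b * a1) * n + 2 * v^2 * n * (b * e)"
    proof -
      have "A * A - b * (m * b) = - 2 * n * b * t" unfolding mb by (simp add: a1 algebra_simps)
      then show ?thesis unfolding a1[symmetric] e[symmetric] by simp
    qed
    also have "\<dots> = 2 * (n * b) * (2 * u * v * a1 - u^2 * t + v^2 * e)"
      by (simp add: power2_eq_square algebra_simps)
    finally show ?thesis by (simp add: mult.commute)
  qed
  then have "n * b dvd Gcd ((\<lambda>y. 2 * y) ` (qnorm ` I))"
    by (intro Gcd_greatest) (auto simp: mult.commute)
  also have "\<dots> = 2 * norm_gcd I"
    using norm_gcd_nonneg[of I] by (simp add: Gcd_mult norm_gcd_def abs_mult)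
  finally show ?thesis using norm_gcd_pos[OF I] by (intro zdvd_imp_le) auto
qed

text \<open>Dirichlet's approximation theorem applied to \<open>(A - b\<surd>m)/(2n)\<close> gives \<open>k \<le> n\<close> and \<open>h\<close> such
  that \<open>k (A + b\<surd>m)/2 - h n \<in> I\<close> has conjugate \<open>(X - k b\<surd>m)/2\<close> of absolute value below \<open>1\<close>.\<close>
lemma ideal_elt_small_conjugate:
  assumes I: "is_ideal I" and basis: "ideal_basis I n A b"
  obtains k X where "0 < k" "k \<le> n" "elt X (k * b) \<in> I" "\<bar>X - of_int (k * b) * \<rho>\<bar> < 2"
proof -
  have n: "n > 0" "of_int n \<in> I" and x0: "elt A b \<in> I"
    using basis unfolding ideal_basis_def by auto
  define \<theta> where "\<theta> = (A - b * \<rho>) / (2 * n)"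
  have "nat n > 0" using n(1) by simp
  then obtain h k where hk: "0 < k" "k \<le> int (nat n)" "\<bar>of_int k * \<theta> - of_int h\<bar> < 1 / real (nat n)"
    using Dirichlet_approx by blast
  have "of_int k * elt A b - of_int (h * n) = elt (k * A - 2 * h * n) (k * b)"
    by (simp only: of_int_mult_elt of_int_eq_elt[of "h * n"] elt_diff) (simp add: algebra_simps)
  moreover have "of_int k * elt A b - of_int (h * n) \<in> I"
    using is_ideal_diff[OF I is_ideal_mult_int[OF I x0] is_ideal_mult_int[OF I n(2)]] by simp
  moreover have "\<bar>(k * A - 2 * h * n) - k * b * \<rho>\<bar> = 2 * n * \<bar>of_int k * \<theta> - of_int h\<bar>"
    using n(1) by (simp add: \<theta>_def field_simps flip: abs_mult)
  moreover have "2 * n * \<bar>of_int k * \<theta> - of_int h\<bar> < 2 * n * (1 / real (nat n))"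
    using hk(3) n(1) by (intro mult_strict_left_mono) auto
  ultimately show ?thesis using that[of k "k * A - 2 * h * n"] hk(1,2) n(1) by simp
qed

text \<open>A Minkowski-type bound: the element above has norm at most \<open>(1 + k b \<surd>m) \<cdot> 1\<close>, and
  \<open>k b \<le> n b \<le> 2 norm_gcd I\<close>.\<close>
lemma exists_small_norm:
  assumes I: "is_ideal I" "I \<noteq> {0}"
  obtains \<alpha> where "\<alpha> \<in> I" "\<alpha> \<noteq> 0" "real_of_int \<bar>qnorm \<alpha>\<bar> \<le> 1 + 2 * \<rho> * real_of_int (norm_gcd I)"
proof -
  obtain n A b where basis: "ideal_basis I n A b" using ideal_basis_exists[OF I] .
  obtain k X where k: "0 < k" "k \<le> n" and "elt X (k * b) \<in> I"
    and small: "\<bar>X - of_int (k * b) * \<rho>\<bar> < 2"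
    using ideal_elt_small_conjugate[OF I(1) basis] .
  have "b > 0" using basis unfolding ideal_basis_def by auto
  define Y where "Y = real_of_int (k * b)"
  have "k * b \<le> n * b" using k \<open>b > 0\<close> by (intro mult_right_mono) auto
  then have "Y * \<rho> \<le> 2 * norm_gcd I * \<rho>"
    using ideal_basis_bound[OF I basis] \<rho>_pos unfolding Y_def by (intro mult_right_mono) linarith+
  moreover have "Y * \<rho> > 0" using k \<open>b > 0\<close> \<rho>_pos by (simp add: Y_def)
  moreover have "\<bar>X + Y * \<rho>\<bar> \<le> \<bar>X - Y * \<rho>\<bar> + \<bar>2 * Y * \<rho>\<bar>"
    using abs_triangle_ineq[of "X - Y * \<rho>" "2 * Y * \<rho>"] by simp
  ultimately have "\<bar>X + Y * \<rho>\<bar> / 2 \<le> 1 + 2 * \<rho> * norm_gcd I"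
    using small unfolding Y_def by (simp add: mult_ac)
  then have bound: "\<bar>X + Y * \<rho>\<bar> / 2 * (\<bar>X - Y * \<rho>\<bar> / 2) \<le> (1 + 2 * \<rho> * norm_gcd I) * 1"
    using small unfolding Y_def by (intro mult_mono) auto
  have "real_of_int \<bar>qnorm (elt X (k * b))\<bar> = \<bar>(X + Y * \<rho>) / 2 * ((X - Y * \<rho>) / 2)\<bar>"
    using qnorm_eq_real_embeddings[OF is_ideal_mem[OF I(1) \<open>elt X (k * b) \<in> I\<close>]] by (simp add: Y_def)
  also have "\<dots> = \<bar>X + Y * \<rho>\<bar> / 2 * (\<bar>X - Y * \<rho>\<bar> / 2)" by (simp add: abs_mult)
  also have "\<dots> \<le> (1 + 2 * \<rho> * norm_gcd I) * 1" by (rule bound)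
  finally show ?thesis
    using that \<open>elt X (k * b) \<in> I\<close> k \<open>b > 0\<close> by (simp add: elt_eq_0_iff)
qed

lemma is_ideal_image_mult:
  assumes I: "is_ideal I" and c: "\<And>x. x \<in> I \<Longrightarrow> c * x \<in> ints"
  shows "is_ideal ((\<lambda>x. c * x) ` I)"
  unfolding is_ideal_in_def
proof (intro conjI ballI)
  show "(\<lambda>x. c * x) ` I \<subseteq> ints" using c by blast
  show "0 \<in> (\<lambda>x. c * x) ` I" using is_ideal_0[OF I] by (metis image_eqI mult_zero_right)
next
  fix x y assume "x \<in> (\<lambda>x. c * x) ` I" "y \<in> (\<lambda>x. c * x) ` I"
  then obtain a b where "a \<in> I" "b \<in> I" "x = c * a" "y = c * b" by blast
  then have "x + y = c * (a + b)" "x - y = c * (a - b)" "a + b \<in> I" "a - b \<in> I"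
    using is_ideal_add[OF I] is_ideal_diff[OF I] by (simp_all add: algebra_simps)
  then show "x + y \<in> (\<lambda>x. c * x) ` I" "x - y \<in> (\<lambda>x. c * x) ` I" by blast+
next
  fix r x assume "r \<in> ints" "x \<in> (\<lambda>x. c * x) ` I"
  then show "r * x \<in> (\<lambda>x. c * x) ` I" using is_ideal_mult[OF I] by (auto simp: mult.left_commute)
qed

text \<open>\<open>G = norm_gcd I\<close> divides \<open>N(x)\<close>, \<open>N(\<alpha>)\<close> and \<open>N(x + \<alpha>) = N(x) + N(\<alpha>) + tr(x \<alpha>')\<close>,
  hence the trace of \<open>x \<alpha>'\<close>, while \<open>G\<^sup>2\<close> divides its norm.\<close>
lemma qconj_mult_div_norm_gcd_ints:
  assumes I: "is_ideal I" "I \<noteq> {0}" and "\<alpha> \<in> I" "x \<in> I"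
  shows "qconj \<alpha> / of_int (norm_gcd I) * x \<in> ints"
proof -
  define G where "G = norm_gcd I"
  have \<alpha>: "\<alpha> \<in> ints" and x: "x \<in> ints" using is_ideal_mem[OF I(1)] assms(3,4) by auto
  have "G dvd qnorm (x + \<alpha>)" "G dvd qnorm x" "G dvd qnorm \<alpha>"
    using norm_gcd_dvd is_ideal_add[OF I(1) assms(4,3)] assms(3,4) by (auto simp: G_def)
  moreover have "tr (x * qconj \<alpha>) = qnorm (x + \<alpha>) - qnorm x - qnorm \<alpha>"
    using qnorm_add[OF x \<alpha>] by simp
  ultimately have "G dvd tr (x * qconj \<alpha>)" by simp
  moreover have "G^2 dvd qnorm (x * qconj \<alpha>)"
    using \<open>G dvd qnorm x\<close> \<open>G dvd qnorm \<alpha>\<close>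
    by (simp add: qnorm_mult[OF x qconj_ints[OF \<alpha>]] power2_eq_square mult_dvd_mono)
  ultimately have "x * qconj \<alpha> / of_int G \<in> ints"
    using ints_div[OF ints_mult[OF x qconj_ints[OF \<alpha>]]] norm_gcd_pos[OF I] by (simp add: G_def)
  then show ?thesis by (simp add: G_def mult.commute)
qed

lemma exists_equiv_small_norm_gcd:
  assumes I: "is_ideal I" "I \<noteq> {0}"
  obtains J where "(I, J) \<in> ideal_equiv ints" "is_ideal J" "J \<noteq> {0}"
    "real_of_int (norm_gcd J) \<le> 1 + 2 * \<rho>"
proof -
  obtain \<alpha> where \<alpha>: "\<alpha> \<in> I" "\<alpha> \<noteq> 0" and small: "real_of_int \<bar>qnorm \<alpha>\<bar> \<le> 1 + 2 * \<rho> * norm_gcd I"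
    using exists_small_norm[OF I] by blast
  define G where "G = norm_gcd I"
  have "G > 0" using norm_gcd_pos[OF I] by (simp add: G_def)
  have \<alpha>_ints: "\<alpha> \<in> ints" using is_ideal_mem[OF I(1) \<alpha>(1)] .
  have "qnorm \<alpha> \<noteq> 0" using qnorm_eq_0_iff[OF \<alpha>_ints] \<alpha>(2) by simp
  then have "qconj \<alpha> \<noteq> 0" using qnorm_eq_0_iff[OF qconj_ints[OF \<alpha>_ints]] by simp
  define J where "J = (\<lambda>x. qconj \<alpha> / of_int G * x) ` I"
  have J: "is_ideal J"
    unfolding J_def G_def using qconj_mult_div_norm_gcd_ints[OF I \<alpha>(1)]
      by (intro is_ideal_image_mult I)
  have "qconj \<alpha> / of_int G * \<alpha> \<noteq> 0" using \<open>qconj \<alpha> \<noteq> 0\<close> \<open>G > 0\<close> \<alpha>(2) by simp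
  then have "J \<noteq> {0}" using \<alpha>(1) unfolding J_def by blast
  have img: "(\<lambda>x. qconj \<alpha> * x) ` I = (\<lambda>y. of_int G * y) ` J"
    using \<open>G > 0\<close> by (auto simp: J_def image_image)
  have equiv: "(I, J) \<in> ideal_equiv ints"
    unfolding ideal_equiv_def nonzero_ideals_def
    using I J \<open>J \<noteq> {0}\<close> qconj_ints[OF \<alpha>_ints] \<open>qconj \<alpha> \<noteq> 0\<close> img \<open>G > 0\<close>
    by (intro CollectI case_prodI conjI bexI[of _ "qconj \<alpha>"] bexI[of _ "of_int G"]) simp_all
  have "G * norm_gcd J = \<bar>qnorm \<alpha>\<bar>"
  proof -
    have "G^2 * norm_gcd J = norm_gcd ((\<lambda>y. of_int G * y) ` J)"
      using norm_gcd_image_mult[OF ints_of_int is_ideal_subset[OF J]] by simp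
    also have "\<dots> = \<bar>qnorm \<alpha>\<bar> * G"
      using norm_gcd_image_mult[OF qconj_ints[OF \<alpha>_ints] is_ideal_subset[OF I(1)]] img
      by (simp add: G_def)
    finally show ?thesis using \<open>G > 0\<close> by (simp add: power2_eq_square)
  qed
  then have "real_of_int G * norm_gcd J \<le> 1 + 2 * \<rho> * G"
    using small unfolding G_def[symmetric] by (metis of_int_mult)
  then have "real_of_int (norm_gcd J) \<le> 1 / G + 2 * \<rho>"
    using \<open>G > 0\<close> by (simp add: field_simps)
  also have "1 / real_of_int G \<le> 1" using \<open>G > 0\<close> by simp
  finally have "real_of_int (norm_gcd J) \<le> 1 + 2 * \<rho>" by simp
  then show ?thesis using that equiv J \<open>J \<noteq> {0}\<close> by blast
qed

text \<open>An ideal containing the positive integer \<open>n\<close> is determined by the residues of its elements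
  modulo \<open>n ints\<close>, represented by coordinates in \<open>[0, 2n)\<close>.\<close>
definition reduce_mod :: "int \<Rightarrow> complex \<Rightarrow> complex" where
  "reduce_mod n x = elt (tr x mod (2 * n)) (sc x mod (2 * n))"

definition residue_reps :: "int \<Rightarrow> complex set" where
  "residue_reps n = (\<lambda>(a, b). elt a b) ` ({0..<2 * n} \<times> {0..<2 * n})"

lemma reduce_mod_in_residue_reps: "n > 0 \<Longrightarrow> reduce_mod n x \<in> residue_reps n"
  unfolding reduce_mod_def residue_reps_def by auto

lemma is_ideal_mem_iff_reduce_mod:
  assumes J: "is_ideal J" and n: "of_int n \<in> J" and x: "x \<in> ints"
  shows "x \<in> J \<longleftrightarrow> reduce_mod n x \<in> J"
proof -
  have "x - reduce_mod n x = elt (2 * n * (tr x div (2 * n))) (2 * n * (sc x div (2 * n)))"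
    using ints_coords[OF x] unfolding reduce_mod_def
      by (metis elt_diff minus_mod_eq_mult_div mult.commute)
  also have "\<dots> = elt (2 * (tr x div (2 * n))) (2 * (sc x div (2 * n))) * of_int n"
    by (simp add: of_int_mult_elt algebra_simps)
  moreover have "elt (2 * (tr x div (2 * n))) (2 * (sc x div (2 * n))) \<in> ints"
    by (rule ints_elt) (simp add: power2_eq_square algebra_simps)
  ultimately have "x - reduce_mod n x \<in> J" using is_ideal_mult[OF J _ n] by simp
  then show ?thesis using is_ideal_add[OF J] is_ideal_diff[OF J] by force
qed

lemma finite_small_norm_gcd_ideals: "finite {J. is_ideal J \<and> J \<noteq> {0} \<and> norm_gcd J \<le> C}"
proof -
  define F where "F = (\<lambda>(n, S). {x \<in> ints. reduce_mod n x \<in> S}) ` (SIGMA n:{1..C}. Pow (residue_reps n))"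
  have "finite F" unfolding F_def residue_reps_def by (intro finite_imageI finite_SigmaI) auto
  moreover have "J \<in> F" if J: "is_ideal J" "J \<noteq> {0}" "norm_gcd J \<le> C" for J
  proof -
    obtain n where n: "n > 0" "of_int n \<in> J" "\<And>k. of_int k \<in> J \<Longrightarrow> n dvd k"
      using ideal_least_int[OF J(1,2)] by blast
    have "n dvd norm_gcd J" using n(3) is_ideal_qnorm[OF J(1)] by (intro dvd_norm_gcd) blast
    then have "n \<in> {1..C}" using norm_gcd_pos[OF J(1,2)] n(1) J(3) zdvd_imp_le by fastforce
    moreover have "J = {x \<in> ints. reduce_mod n x \<in> J \<inter> residue_reps n}"
      using is_ideal_mem_iff_reduce_mod[OF J(1) n(2)] is_ideal_mem[OF J(1)]
        reduce_mod_in_residue_reps[OF n(1)] by blast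
    ultimately show "J \<in> F" unfolding F_def
      by (intro image_eqI[of _ _ "(n, J \<inter> residue_reps n)"]) auto
  qed
  ultimately show ?thesis by (auto intro: finite_subset)
qed

theorem finite_ideal_classes: "finite (nonzero_ideals ints // ideal_equiv ints)"
proof -
  define S where "S = {J. is_ideal J \<and> J \<noteq> {0} \<and> norm_gcd J \<le> \<lfloor>1 + 2 * \<rho>\<rfloor>}"
  have "nonzero_ideals ints // ideal_equiv ints \<subseteq> (\<lambda>J. ideal_equiv ints `` {J}) ` S"
  proof
    fix X assume "X \<in> nonzero_ideals ints // ideal_equiv ints"
    then obtain I where I: "I \<in> nonzero_ideals ints" and X: "X = ideal_equiv ints `` {I}"
      by (auto elim: quotientE)
    then obtain J where J: "(I, J) \<in> ideal_equiv ints" "is_ideal J" "J \<noteq> {0}"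
      "real_of_int (norm_gcd J) \<le> 1 + 2 * \<rho>"
      using exists_equiv_small_norm_gcd by (auto simp: nonzero_ideals_def)
    then have "norm_gcd J \<le> \<lfloor>1 + 2 * \<rho>\<rfloor>" by (simp only: le_floor_iff)
    then have "J \<in> S" using J by (simp add: S_def)
    moreover have "X = ideal_equiv ints `` {J}"
      using X equiv_class_eq[OF equiv_ideal_equiv_ints J(1)] by simp
    ultimately show "X \<in> (\<lambda>J. ideal_equiv ints `` {J}) ` S" by blast
  qed
  moreover have "finite S" unfolding S_def by (rule finite_small_norm_gcd_ideals)
  ultimately show ?thesis by (rule finite_surj[rotated])
qed

end

section \<open>Genus characters and a lower bound for the class number\<close>

definition genus_witnesses :: "int \<Rightarrow> nat \<Rightarrow> bool" where
  "genus_witnesses m S \<longleftrightarrow> (\<exists>q s. \<forall>c<S. prime (q c) \<and> q c > 2 \<and> q c dvd m \<and> Legendre (-1) (q c) = 1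
     \<and> s c > 0 \<and> s c dvd m \<and> (\<forall>c'<S. Legendre (s c) (q c') = (if c = c' then -1 else 1)))"

lemma genus_witnesses_dvd: "genus_witnesses d S \<Longrightarrow> d dvd m \<Longrightarrow> genus_witnesses m S"
  unfolding genus_witnesses_def by (meson dvd_trans)

context real_quadratic_field
begin

text \<open>The ideal \<open>(t, \<surd>m)\<close>; for \<open>t \<bar> m\<close> its square is \<open>(t)\<close>, and its class is detected by
  genus characters.\<close>
definition ramified_ideal :: "int \<Rightarrow> complex set" where
  "ramified_ideal t = {of_int t * y + \<omega> * z | y z. y \<in> ints \<and> z \<in> ints}"

lemma ramified_ideal_is_ideal:
  assumes t: "t > 0"
  shows "is_ideal (ramified_ideal t)" "ramified_ideal t \<noteq> {0}"
proof -
  show "is_ideal (ramified_ideal t)"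
    unfolding is_ideal_in_def
  proof (intro conjI ballI)
    show "ramified_ideal t \<subseteq> ints" unfolding ramified_ideal_def
      by (auto intro!: ints_add ints_mult ints_of_int ints_\<omega>)
    show "0 \<in> ramified_ideal t" unfolding ramified_ideal_def using ints_0 by force
  next
    fix x y assume "x \<in> ramified_ideal t" "y \<in> ramified_ideal t"
    then obtain y1 z1 y2 z2 where x: "x = of_int t * y1 + \<omega> * z1" "y1 \<in> ints" "z1 \<in> ints"
      and y: "y = of_int t * y2 + \<omega> * z2" "y2 \<in> ints" "z2 \<in> ints" unfolding ramified_ideal_def
        by blast
    have "x + y = of_int t * (y1 + y2) + \<omega> * (z1 + z2)" using x y by (simp add: algebra_simps)
    then show "x + y \<in> ramified_ideal t" unfolding ramified_ideal_def using x y
      by (blast intro: ints_add)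
    have "x - y = of_int t * (y1 - y2) + \<omega> * (z1 - z2)" using x y by (simp add: algebra_simps)
    then show "x - y \<in> ramified_ideal t" unfolding ramified_ideal_def using x y
      by (blast intro: ints_diff)
  next
    fix c x assume c: "c \<in> ints" and "x \<in> ramified_ideal t"
    then obtain y1 z1 where x: "x = of_int t * y1 + \<omega> * z1" "y1 \<in> ints" "z1 \<in> ints"
      unfolding ramified_ideal_def by blast
    have "c * x = of_int t * (c * y1) + \<omega> * (c * z1)" using x by (simp add: algebra_simps)
    then show "c * x \<in> ramified_ideal t" unfolding ramified_ideal_def using x c
      by (blast intro: ints_mult)
  qed
  have "of_int t \<in> ramified_ideal t" unfolding ramified_ideal_def using ints_1 ints_0 by force
  moreover have "(of_int t :: complex) \<noteq> 0" using t by simp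
  ultimately show "ramified_ideal t \<noteq> {0}" by blast
qed

lemma norm_gcd_ramified_ideal:
  assumes t: "t > 0" "t dvd m"
  shows "norm_gcd (ramified_ideal t) = t"
proof -
  obtain k where k: "m = t * k" using t(2) by blast
  have cop: "coprime t k" using m_squarefree k squarefree_mult_imp_coprime by simp
  have d1: "t dvd norm_gcd (ramified_ideal t)"
  proof (rule dvd_norm_gcd)
    fix x assume "x \<in> ramified_ideal t"
    then obtain y z where x: "x = of_int t * y + \<omega> * z" "y \<in> ints" "z \<in> ints"
      unfolding ramified_ideal_def by blast
    have ty: "of_int t * y \<in> ints" using x(2) by (simp add: ints_mult ints_of_int)
    have wz: "\<omega> * z \<in> ints" using x(3) by (simp add: ints_mult ints_\<omega>)
    have "qnorm x = qnorm (of_int t * y) + qnorm (\<omega> * z) + tr (of_int t * y * qconj (\<omega> * z))"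
      using qnorm_add[OF ty wz] x(1) by simp
    also have "\<dots> = t^2 * qnorm y - m * qnorm z + t * tr (y * qconj (\<omega> * z))"
      using x(2,3) qconj_ints[OF wz]
      by (simp add: qnorm_mult ints_of_int ints_\<omega> qnorm_\<omega> mult.assoc ints_int_mult_coords(1) ints_mult)
    finally have "qnorm x = t * (t * qnorm y - k * qnorm z + tr (y * qconj (\<omega> * z)))"
      by (simp add: k power2_eq_square algebra_simps)
    then show "t dvd qnorm x" by simp
  qed
  have d2: "norm_gcd (ramified_ideal t) dvd t"
  proof -
    have "of_int t \<in> ramified_ideal t" unfolding ramified_ideal_def using ints_1 ints_0 by force
    then have a: "norm_gcd (ramified_ideal t) dvd t^2" using norm_gcd_dvd by fastforce
    have "\<omega> \<in> ramified_ideal t" unfolding ramified_ideal_def using ints_1 ints_0 by force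
    then have "norm_gcd (ramified_ideal t) dvd - m" using norm_gcd_dvd qnorm_\<omega> by fastforce
    then have b: "norm_gcd (ramified_ideal t) dvd t * k" using k by simp
    have "norm_gcd (ramified_ideal t) dvd gcd (t * t) (t * k)" using a b
      by (simp add: power2_eq_square)
    also have "gcd (t * t) (t * k) = t * gcd t k" using t(1) by (simp add: gcd_mult_left)
    also have "\<dots> = t" using cop by simp
    finally show ?thesis .
  qed
  show ?thesis using d1 d2 t(1) norm_gcd_nonneg[of "ramified_ideal t"]
    by (simp add: zdvd_antisym_nonneg)
qed


text \<open>For \<open>q \<bar> m\<close> with \<open>q \<equiv> 1 (mod 4)\<close> the genus character at \<open>q\<close> is \<open>1\<close> on \<open>|N(\<alpha>)|\<close>,
  hence a class invariant.\<close>
lemma genus_char_ideal_equiv: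
  assumes q: "prime q" "q > 2" "q dvd m" "Legendre (-1) q = 1"
    and "(I, J) \<in> ideal_equiv ints"
  shows "genus_char q (m div q) (norm_gcd I) = genus_char q (m div q) (norm_gcd J)"
proof -
  define w where "w = m div q"
  have m: "m = q * w" using q(3) by (simp add: w_def)
  have "\<not> q dvd w"
  proof
    assume "q dvd w"
    then have "q^2 dvd m" by (simp add: m power2_eq_square mult_dvd_mono)
    then show False using m_squarefree q(1) squarefreeD not_prime_unit by blast
  qed
  interpret genus_character q w using q \<open>\<not> q dvd w\<close> by unfold_locales auto
  have "genus_char q w \<bar>qnorm \<alpha>\<bar> = 1" if \<alpha>: "\<alpha> \<in> ints" "\<alpha> \<noteq> 0" for \<alpha>
  proof -
    have "qnorm \<alpha> \<noteq> 0" using qnorm_eq_0_iff[OF \<alpha>(1)] \<alpha>(2) by simp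
    moreover have "4 * qnorm \<alpha> = tr \<alpha> ^ 2 - q * w * sc \<alpha> ^ 2" using four_qnorm[OF \<alpha>(1)] m by simp
    ultimately have "genus_char q w (2^2 * qnorm \<alpha>) = 1" using genus_char_norm_form by simp
    moreover have "\<not> q dvd 2" using q(2) by (auto dest: zdvd_imp_le)
    ultimately have "genus_char q w (qnorm \<alpha>) = 1"
      using genus_char_square_mult[OF \<open>qnorm \<alpha> \<noteq> 0\<close>, of 2] by simp
    moreover have "genus_char q w (-1) = 1"
      using genus_char_not_dvd[of q "-1"] q(2,4) by (auto dest: zdvd_imp_le)
    ultimately show ?thesis
      using genus_char_mult[of "-1" "qnorm \<alpha>"] \<open>qnorm \<alpha> \<noteq> 0\<close> by (cases "qnorm \<alpha> \<ge> 0") auto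
  qed
  then show ?thesis
    unfolding w_def[symmetric] using genus_char_mult assms(5)
      by (intro ideal_equiv_norm_gcd_invariant)
qed

text \<open>The ideals \<open>(1, \<surd>m)\<close> and \<open>(s\<^sub>c, \<surd>m)\<close> lie in \<open>S + 1\<close> distinct classes, separated by the
  genus characters at the \<open>q\<^sub>c\<close>.\<close>
theorem class_number_ge:
  assumes "genus_witnesses m S"
  shows "S + 1 \<le> class_number m"
proof -
  obtain q s where q: "\<And>c. c < S \<Longrightarrow> prime (q c) \<and> q c > 2 \<and> q c dvd m \<and> Legendre (-1) (q c) = 1"
    and s: "\<And>c. c < S \<Longrightarrow> s c > 0 \<and> s c dvd m"
    and Ls: "\<And>c c'. c < S \<Longrightarrow> c' < S \<Longrightarrow> Legendre (s c) (q c') = (if c = c' then -1 else 1)"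
    using assms unfolding genus_witnesses_def by metis
  define t where "t c = (if c < S then s c else 1)" for c
  have t: "t c > 0" "t c dvd m" for c using s by (auto simp: t_def)
  define X where "X c = ideal_equiv ints `` {ramified_ideal (t c)}" for c
  have I_t: "ramified_ideal (t c) \<in> nonzero_ideals ints" for c
    using ramified_ideal_is_ideal[OF t(1)] by (simp add: nonzero_ideals_def)
  have char_value:
    "genus_char (q d) (m div q d) (norm_gcd (ramified_ideal (t c))) = (if c = d then -1 else 1)"
    if "d < S" "c \<le> S" for c d
  proof -
    have "Legendre (t c) (q d) = (if c = d then -1 else 1)"
      using Ls[of c d] Legendre_1[of "q d"] q[OF \<open>d < S\<close>] that by (auto simp: t_def)
    moreover from this have "\<not> q d dvd t c" by (auto simp flip: Legendre_eq_0_iff)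
    ultimately show ?thesis by (simp add: norm_gcd_ramified_ideal[OF t] genus_char_not_dvd)
  qed
  have "inj_on X {0..S}"
  proof (rule inj_onI, rule ccontr)
    fix c c' assume "c \<in> {0..S}" "c' \<in> {0..S}" "X c = X c'" "c \<noteq> c'"
    then have equiv: "(ramified_ideal (t c), ramified_ideal (t c')) \<in> ideal_equiv ints"
      using equiv_class_eq_iff[OF equiv_ideal_equiv_ints] I_t unfolding X_def by blast
    obtain d where "d < S" "d = c \<or> d = c'"
      using \<open>c \<noteq> c'\<close> \<open>c \<in> _\<close> \<open>c' \<in> _\<close> by (metis atLeastAtMost_iff le_neq_implies_less)
    then show False
      using genus_char_ideal_equiv[OF _ _ _ _ equiv] q[OF \<open>d < S\<close>] char_value[of d c] char_value[of d c']
        \<open>c \<noteq> c'\<close> \<open>c \<in> _\<close> \<open>c' \<in> _\<close> by auto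
  qed
  then have "card (X ` {0..S}) = S + 1" by (simp add: card_image)
  moreover have "X ` {0..S} \<subseteq> nonzero_ideals ints // ideal_equiv ints"
    using I_t unfolding X_def by (auto intro: quotientI)
  then have "card (X ` {0..S}) \<le> card (nonzero_ideals ints // ideal_equiv ints)"
    by (rule card_mono[OF finite_ideal_classes])
  ultimately show ?thesis by (simp add: class_number_def quad_ints_eq)
qed

end

lemma quad_field_square_mult:
  fixes f m :: int
  assumes "f \<noteq> 0" "m > 0"
  shows "quad_field (f^2 * m) = quad_field m"
proof -
  have c: "csqrt (of_int (f^2 * m)) = of_int \<bar>f\<bar> * csqrt (of_int m)"
    using assms(2) csqrt_of_real[of "real_of_int (f^2 * m)"] csqrt_of_real[of "real_of_int m"]
    by (simp add: real_sqrt_mult flip: of_int_abs)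
  have "(of_int \<bar>f\<bar> :: complex) \<noteq> 0" using assms(1) by simp
  show ?thesis
  proof (intro subset_antisym subsetI)
    fix x assume "x \<in> quad_field (f^2 * m)"
    then obtain a b where x: "x = a + b * csqrt (of_int (f^2 * m))" "a \<in> \<rat>" "b \<in> \<rat>"
      unfolding quad_field_def by blast
    then have "x = a + (b * of_int \<bar>f\<bar>) * csqrt (of_int m)" "b * of_int \<bar>f\<bar> \<in> \<rat>"
      using c by (simp_all add: mult.assoc)
    then show "x \<in> quad_field m" unfolding quad_field_def using x(2) by blast
  next
    fix x assume "x \<in> quad_field m"
    then obtain a b where x: "x = a + b * csqrt (of_int m)" "a \<in> \<rat>" "b \<in> \<rat>"
      unfolding quad_field_def by blast
    then have "x = a + (b / of_int \<bar>f\<bar>) * csqrt (of_int (f^2 * m))" "b / of_int \<bar>f\<bar> \<in> \<rat>"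
      using c \<open>(of_int \<bar>f\<bar> :: complex) \<noteq> 0\<close> by simp_all
    then show "x \<in> quad_field (f^2 * m)" unfolding quad_field_def using x(2) by blast
  qed
qed

lemma class_number_square_mult:
  fixes f m :: int
  assumes "f \<noteq> 0" "m > 0"
  shows "class_number (f^2 * m) = class_number m"
  unfolding class_number_def quad_ints_def quad_field_square_mult[OF assms] ..

lemma class_number_mult_ge:
  fixes d j :: int
  assumes d: "squarefree d" "d > 1" "coprime (fact k) d" "genus_witnesses d S"
    and j: "1 \<le> j" "j \<le> int k"
  shows "S + 1 \<le> class_number (j * d)"
proof -
  define j' f where "j' = squarefree_part j" and "f = square_part j"
  have j_eq: "j = j' * f^2" unfolding j'_def f_def by (rule squarefree_decompose)
  have "f \<noteq> 0" using j by (simp add: f_def)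
  then have "j' > 0" using j j_eq by (smt (verit) mult_nonpos_nonneg zero_le_power2)
  have "nat j dvd fact k" using j by (intro dvd_fact) auto
  then have "int (nat j) dvd int (fact k)" by (simp only: of_nat_dvd_iff)
  then have "j dvd fact k" using j by (simp add: of_nat_fact)
  then have "coprime j' d" using d(3) j_eq by (metis coprime_divisors dvd_refl dvd_triv_left)
  then have "squarefree (j' * d)" using d(1) by (simp add: squarefree_mult_coprime j'_def)
  moreover have "j' * d > 1" using \<open>j' > 0\<close> d(2) by (smt (verit) mult_le_cancel_right1)
  ultimately interpret real_quadratic_field "j' * d" by unfold_locales
  have "S + 1 \<le> class_number (j' * d)"
    by (rule class_number_ge, rule genus_witnesses_dvd[OF d(4)]) simp
  also have "class_number (j' * d) = class_number (j * d)"
    using class_number_square_mult[OF \<open>f \<noteq> 0\<close>, of "j' * d"] \<open>j' * d > 1\<close> by (simp add: j_eq mult_ac)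
  finally show ?thesis .
qed

section \<open>Squarefree numbers with many genera\<close>

lemma exists_Legendre_pattern:
  fixes q :: "nat \<Rightarrow> int" and K :: int
  assumes q: "\<And>c. c < S \<Longrightarrow> prime (q c) \<and> q c > 2" and "inj_on q {..<S}"
    and K: "K > 0" "\<And>c. c < S \<Longrightarrow> coprime K (q c)" and "c0 < S"
  obtains n where "n > 0" "[n = 1] (mod K)"
    "\<And>c. c < S \<Longrightarrow> Legendre n (q c) = (if c = c0 then -1 else 1)"
proof -
  obtain a where a: "0 < a" "Legendre a (q c0) = -1"
    using Legendre_nonresidue_exists q[OF \<open>c0 < S\<close>] by blast
  define modulus where "modulus c = nat (if c < S then q c else K)" for c
  define target where "target c = nat (if c = c0 then a else 1)" for c
  have "coprime (modulus c) (modulus c')" if "c \<le> S" "c' \<le> S" "c \<noteq> c'" for c c'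
  proof -
    have "coprime (q c) (q c')" if "c < S" "c' < S" "c \<noteq> c'"
      using that q[of c] q[of c'] inj_onD[OF \<open>inj_on q {..<S}\<close>, of c c']
      by (intro primes_coprime) auto
    then have "coprime (if c < S then q c else K) (if c' < S then q c' else K)"
      using that K(2) by (auto simp: coprime_commute)
    moreover have "(if c < S then q c else K) \<ge> 0" "(if c' < S then q c' else K) \<ge> 0"
      using q[of c] q[of c'] K(1) by auto
    ultimately have "coprime (int (modulus c)) (int (modulus c'))" by (simp add: modulus_def)
    then show ?thesis by simp
  qed
  then obtain x where x: "\<And>c. c \<le> S \<Longrightarrow> [x = target c] (mod modulus c)"
    using chinese_remainder_nat[of "{..S}" modulus target] by auto
  have cong: "[int x = (if c = c0 then a else 1)] (mod (if c < S then q c else K))" if "c \<le> S" for c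
    using x[OF that] q[of c] K(1) a(1) unfolding modulus_def target_def
    by (auto simp: cong_int_iff[symmetric] simp del: of_nat_eq_iff)
  have L: "Legendre (int x) (q c) = (if c = c0 then -1 else 1)" if "c < S" for c
    using Legendre_cong[OF cong[of c]] that a(2) Legendre_1 q[OF that] by auto
  have "x \<noteq> 0"
  proof
    assume "x = 0"
    then show False using L[OF \<open>c0 < S\<close>] by (simp add: Legendre_def)
  qed
  then show ?thesis using that[of "int x"] L cong[of S] \<open>c0 < S\<close> by simp
qed

lemma exists_squarefree_Legendre_pattern:
  fixes q :: "nat \<Rightarrow> int" and K :: int
  assumes q: "\<And>c. c < S \<Longrightarrow> prime (q c) \<and> q c > 2" and "inj_on q {..<S}"
    and K: "K > 0" "\<And>c. c < S \<Longrightarrow> coprime K (q c)" and "c0 < S"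
  obtains s where "s > 0" "squarefree s" "coprime s K"
    "\<And>c. c < S \<Longrightarrow> Legendre s (q c) = (if c = c0 then -1 else 1)"
proof -
  obtain n where n: "n > 0" "[n = 1] (mod K)"
    "\<And>c. c < S \<Longrightarrow> Legendre n (q c) = (if c = c0 then -1 else 1)"
    using exists_Legendre_pattern[OF assms] by blast
  define s f where "s = squarefree_part n" and "f = square_part n"
  have n_eq: "n = s * f^2" unfolding s_def f_def by (rule squarefree_decompose)
  have "f \<noteq> 0" using n(1) by (simp add: f_def)
  then have "s > 0" using n(1) n_eq by (simp add: zero_less_mult_iff)
  have "coprime s K"
    using cong_imp_coprime[OF cong_sym[OF n(2)]] n_eq by (simp add: coprime_commute)
  have "Legendre s (q c) = (if c = c0 then -1 else 1)" if "c < S" for c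
  proof -
    have "\<not> q c dvd n" using n(3)[OF that] by (auto simp flip: Legendre_eq_0_iff)
    then have "\<not> q c dvd f" using n_eq by (metis dvd_mult dvd_mult2 power2_eq_square)
    then have "Legendre n (q c) = Legendre s (q c)"
      using q[OF that] by (simp add: n_eq Legendre_mult Legendre_square)
    then show ?thesis using n(3)[OF that] by simp
  qed
  then show ?thesis using that \<open>s > 0\<close> \<open>coprime s K\<close> by (simp add: s_def)
qed

lemma exists_genus_witness_family:
  fixes q :: "nat \<Rightarrow> int" and K :: int
  assumes q: "\<And>c. c < S \<Longrightarrow> prime (q c) \<and> q c > 2" and inj: "inj_on q {..<S}"
    and K: "K > 0" "\<And>c. c < S \<Longrightarrow> coprime K (q c)"
  shows "\<exists>s. \<forall>c<S. s c > 0 \<and> squarefree (s c) \<and> coprime (s c) K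
    \<and> (\<forall>c'<S. Legendre (s c) (q c') = (if c = c' then -1 else 1)) \<and> (\<forall>c'<c. coprime (s c) (s c'))"
    (is "\<exists>s. \<forall>c<S. ?P s c")
proof -
  have "\<exists>s. \<forall>c<j. ?P s c" if "j \<le> S" for j
    using that
  proof (induction j)
    case (Suc j)
    then obtain s where s: "\<And>c. c < j \<Longrightarrow> ?P s c" by auto
    define K' where "K' = K * (\<Prod>c<j. s c)"
    have "(\<Prod>c<j. s c) > 0" using s by (intro prod_pos) auto
    then have "K' > 0" using K(1) by (simp add: K'_def)
    moreover have "coprime K' (q c')" if "c' < S" for c'
    proof -
      have "coprime (s c) (q c')" if "c < j" for c
        using s[OF that] \<open>c' < S\<close> q[OF \<open>c' < S\<close>] by (intro coprime_if_Legendre_nonzero) auto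
      then show ?thesis using K(2)[OF that] by (auto simp: K'_def intro: prod_coprime_left)
    qed
    ultimately obtain n where n: "n > 0" "squarefree n" "coprime n K'"
      "\<And>c. c < S \<Longrightarrow> Legendre n (q c) = (if c = j then -1 else 1)"
      using exists_squarefree_Legendre_pattern[OF q inj] Suc.prems by (metis Suc_le_lessD)
    have n_s: "coprime n (s c)" if "c < j" for c
      using n(3) that by (auto simp: K'_def dvd_prodI intro: coprime_divisors[OF dvd_refl])
    have "?P (s(j := n)) c" if "c < Suc j" for c
    proof (cases "c = j")
      case True
      then show ?thesis using n n_s by (auto simp: K'_def eq_commute[of j])
    next
      case False
      then show ?thesis using that s[of c] by (auto simp: less_Suc_eq)
    qed
    then show ?case by blast
  qed simp
  then show ?thesis by blast
qed

lemma exists_prime_sequence_Legendre_minus_one: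
  fixes N :: int
  shows "\<exists>q :: nat \<Rightarrow> int. strict_mono q \<and>
    (\<forall>c. prime (q c) \<and> q c > N \<and> q c > 2 \<and> Legendre (-1) (q c) = 1)"
proof -
  have "\<forall>N. \<exists>p. prime p \<and> p > N \<and> p > 2 \<and> Legendre (-1) p = 1"
    using exists_prime_Legendre_minus_one by metis
  then obtain g where g: "\<And>N. prime (g N) \<and> g N > N \<and> g N > 2 \<and> Legendre (-1) (g N) = 1"
    by metis
  define q where "q = rec_nat (g N) (\<lambda>_ p. g p)"
  have q_Suc: "q (Suc c) = g (q c)" for c by (simp add: q_def)
  have "prime (q c) \<and> q c > N \<and> q c > 2 \<and> Legendre (-1) (q c) = 1" for c
    by (induction c) (use g in \<open>auto simp: q_def intro: less_trans\<close>)
  moreover have "strict_mono q"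
    by (rule strict_mono_Suc_iff[THEN iffD2]) (simp add: q_Suc g)
  ultimately show ?thesis by blast
qed

lemma exists_squarefree_genus_witnesses:
  fixes N K :: int
  assumes "K > 0" "S > 0"
  obtains d where "d > N" "squarefree d" "coprime K d" "genus_witnesses d S"
proof -
  obtain q :: "nat \<Rightarrow> int" where "strict_mono q"
    and q_all: "\<forall>c. prime (q c) \<and> q c > max N K \<and> q c > 2 \<and> Legendre (-1) (q c) = 1"
    using exists_prime_sequence_Legendre_minus_one[of "max N K"] by blast
  then have q: "prime (q c) \<and> q c > max N K \<and> q c > 2 \<and> Legendre (-1) (q c) = 1" for c by blast
  have inj: "inj_on q {..<S}" using \<open>strict_mono q\<close> strict_mono_imp_inj_on by blast
  have coprime_K: "coprime K (q c)" for c
    using q[of c] \<open>K > 0\<close> by (intro prime_imp_coprime[THEN coprime_commute[THEN iffD1]])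
      (auto dest: zdvd_imp_le)
  obtain s where s: "\<And>c. c < S \<Longrightarrow> s c > 0 \<and> squarefree (s c) \<and> coprime (s c) K
    \<and> (\<forall>c'<S. Legendre (s c) (q c') = (if c = c' then -1 else 1)) \<and> (\<forall>c'<c. coprime (s c) (s c'))"
    using exists_genus_witness_family[of S q K] q inj \<open>K > 0\<close> coprime_K by metis
  have s_q: "coprime (s c) (q c')" if "c < S" "c' < S" for c c'
    using s[OF that(1)] that(2) q[of c'] by (intro coprime_if_Legendre_nonzero) auto
  have s_s: "coprime (s a) (s b)" if "a < S" "b < S" "a \<noteq> b" for a b
    using s[OF that(1)] s[OF that(2)] that(3) by (metis coprime_commute linorder_neq_iff)
  define d where "d = (\<Prod>c<S. q c) * (\<Prod>c<S. s c)"
  have "q c dvd d" "s c dvd d" if "c < S" for c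
    using that by (auto simp: d_def intro: dvd_mult dvd_mult2 dvd_prodI)
  then have "genus_witnesses d S" unfolding genus_witnesses_def using q s by (intro exI) auto
  moreover have "squarefree d" unfolding d_def
  proof (intro squarefree_mult_coprime squarefree_prod_coprime)
    show "coprime (\<Prod>c<S. q c) (\<Prod>c<S. s c)"
      by (intro prod_coprime_left prod_coprime_right) (use s_q in \<open>auto simp: coprime_commute\<close>)
  qed (use q s s_s inj in \<open>auto simp: primes_coprime squarefree_prime inj_on_eq_iff\<close>)
  moreover have "coprime K d"
    using s coprime_K by (auto simp: d_def coprime_commute intro!: prod_coprime_right)
  moreover have "d > N"
  proof -
    have "(\<Prod>c<S. q c) \<ge> q 0" using q \<open>S > 0\<close>
      by (intro zdvd_imp_le dvd_prodI prod_pos) (auto intro: less_trans[of 0 2])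
    moreover have "(\<Prod>c<S. s c) \<ge> 1" using s
      by (intro prod_ge_1) (auto simp: int_one_le_iff_zero_less)
    ultimately show ?thesis using q[of 0] by (smt (verit) d_def mult_le_cancel_left1)
  qed
  ultimately show ?thesis using that by blast
qed

theorem mainTheorem2:
  fixes k :: nat and M :: real
  assumes "k \<ge> 1" and "M > 0"
  shows "infinite {d :: int. d > 0 \<and> squarefree d \<and>
           (\<forall>j \<in> {1..int k}. real (class_number (j * d)) > M)}"
  unfolding infinite_int_iff_unbounded
proof
  fix B :: int
  define S where "S = nat \<lceil>M\<rceil>"
  have "S > 0" using \<open>M > 0\<close> by (simp add: S_def)
  then obtain d where d: "d > max B 1" "squarefree d" "coprime (fact k) d" "genus_witnesses d S"
    using exists_squarefree_genus_witnesses[of "fact k" S "max B 1"] by force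
  have "real (class_number (j * d)) > M" if "j \<in> {1..int k}" for j
    using class_number_mult_ge[of d k S j] d that by (simp add: S_def) linarith
  then show "\<exists>d. B < \<bar>d\<bar> \<and>
      d \<in> {d. d > 0 \<and> squarefree d \<and> (\<forall>j \<in> {1..int k}. real (class_number (j * d)) > M)}"
    using d by (intro exI[of _ d]) auto
qed

end
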